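(* Let $N\ge K\ge1$, $\mathbf{H}\in\mathbb{R}^{N\times K}$ full column rank, with orthonormal eigenvectors $\mathbf{u}_1,\ldots,\mathbf{u}_N$ of $\mathbf{H}\mathbf{H}^T$, $\mathbf{H}\mathbf{H}^T\mathbf{u}_i=\rho_i^2\mathbf{u}_i$, $\rho_1^2\ge\cdots\ge\rho_N^2\ge0$, $\rho_1^2>\rho_N^2$. Let $1\le M_1\le N$, $M=M_1$, and use only the measurement matrix $\boldsymbol{\Phi}_s=\frac{1}{\sqrt{M_1}}\mathbf{T}_s[\mathbf{u}_1,\ldots,\mathbf{u}_{M_1}]^T$ with $\mathbf{T}_s$ an $M_1\times M_1$ orthogonal matrix. Assume the noise variance $\sigma_0^2$ is known and, for $\gamma>0$, consider the test deciding $\mathcal{H}_1$ when $$\mathcal{T}=\frac{\sum_{n=1}^{N_b}\mathbf{z}_s[n]^T\mathbf{z}_s[n]}{\sigma_0^2/M_1}>\gamma.$$ Then $P_{FA}=\mathbb{Q}_{\chi^2(M_1N_b)}(\gamma)$ and $$\mathbb{Q}_{\chi^2(M_1N_b)}(\eta'_{lb}\gamma)\le P_D\le\mathbb{Q}_{\chi^2(M_1N_b)}(\eta'_{ub}\gamma),$$ where $\eta'_{lb}=\frac{\sigma_0^2}{\sigma_0^2+\sigma_x^2\rho_{M_1}^2}$ and $\eta'_{ub}=\frac{\sigma_0^2}{\sigma_0^2+\sigma_x^2\rho_1^2}$.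
   Context: Observations over $n=1,\ldots,N_b$: rows $\boldsymbol{\phi}_m^T$ of $\boldsymbol{\Phi}_s$ represent $M_1$ devices; under $\mathcal{H}_0$ device $m$ outputs $z_m[n]=\boldsymbol{\phi}_m^T\mathbf{w}_m[n]$, under $\mathcal{H}_1$ it outputs $z_m[n]=\boldsymbol{\phi}_m^T(\mathbf{H}\mathbf{x}[n]+\mathbf{w}_m[n])$, with $\mathbf{x}[n]\sim\mathcal{N}(\mathbf{0}_{K,1},\sigma_x^2\mathbf{I}_K)$, $\mathbf{w}_m[n]\sim\mathcal{N}(\mathbf{0}_{N,1},\sigma_0^2\mathbf{I}_N)$, $\sigma_0^2>0$, all mutually independent across $m,n$; $\mathbf{z}_s[n]=(z_1[n],\ldots,z_{M_1}[n])^T$. $P_{FA}=\Pr(\mathcal{T}>\gamma\mid\mathcal{H}_0)$, $P_D=\Pr(\mathcal{T}>\gamma\mid\mathcal{H}_1)$; $\mathbb{Q}_{\chi^2(d)}(x)=\Pr(X>x)$ for $X$ chi-squared with $d$ degrees of freedom. *)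

theory Defs
  imports "HOL-Probability.Probability"
begin

definition chi2_density :: "nat \<Rightarrow> real \<Rightarrow> real" where
  "chi2_density d t =
     (if t > 0 then t powr (real d / 2 - 1) * exp (- t / 2) / (2 powr (real d / 2) * Gamma (real d / 2))
      else 0)"

definition Qchi2 :: "nat \<Rightarrow> real \<Rightarrow> real" where
  "Qchi2 d x = (LINT t:{x<..}|lborel. chi2_density d t)"

text \<open>Matrices are functions nat => nat => real with explicit index bounds (0-based).
  Measurement matrix Phi_s = (1/sqrt M1) T_s [u_1 ... u_M1]^T; u l is the l-th eigenvector
  (0-based), with components u l j, j < N.\<close>

definition Phi_s :: "nat \<Rightarrow> (nat \<Rightarrow> nat \<Rightarrow> real) \<Rightarrow> (nat \<Rightarrow> nat \<Rightarrow> real) \<Rightarrow> nat \<Rightarrow> nat \<Rightarrow> real" where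
  "Phi_s M1 T u m j = (1 / sqrt (real M1)) * (\<Sum>l<M1. T m l * u l j)"

text \<open>Output of device m at time n. hyp = False: H0, hyp = True: H1.
  x[n]_k = sigma_x * X n k omega, w_m[n]_j = sigma_0 * W m n j omega, with X, W i.i.d. standard normal.\<close>

definition z_out :: "bool \<Rightarrow> nat \<Rightarrow> nat \<Rightarrow> (nat \<Rightarrow> nat \<Rightarrow> real) \<Rightarrow> (nat \<Rightarrow> nat \<Rightarrow> real) \<Rightarrow> real \<Rightarrow> real
     \<Rightarrow> (nat \<Rightarrow> nat \<Rightarrow> 'a \<Rightarrow> real) \<Rightarrow> (nat \<Rightarrow> nat \<Rightarrow> nat \<Rightarrow> 'a \<Rightarrow> real) \<Rightarrow> nat \<Rightarrow> nat \<Rightarrow> 'a \<Rightarrow> real" where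
  "z_out hyp N K Phi H sx s0 X W m n \<omega> =
     (\<Sum>j<N. Phi m j * ((if hyp then (\<Sum>k<K. H j k * (sx * X n k \<omega>)) else 0) + s0 * W m n j \<omega>))"

definition test_stat :: "bool \<Rightarrow> nat \<Rightarrow> nat \<Rightarrow> nat \<Rightarrow> nat \<Rightarrow> (nat \<Rightarrow> nat \<Rightarrow> real) \<Rightarrow> (nat \<Rightarrow> nat \<Rightarrow> real)
     \<Rightarrow> real \<Rightarrow> real \<Rightarrow> (nat \<Rightarrow> nat \<Rightarrow> 'a \<Rightarrow> real) \<Rightarrow> (nat \<Rightarrow> nat \<Rightarrow> nat \<Rightarrow> 'a \<Rightarrow> real) \<Rightarrow> 'a \<Rightarrow> real" where
  "test_stat hyp N K M1 Nb Phi H sx s0 X W \<omega> =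
     (\<Sum>n<Nb. \<Sum>m<M1. (z_out hyp N K Phi H sx s0 X W m n \<omega>)\<^sup>2) / (s0\<^sup>2 / real M1)"

end

theory Submission
  imports Defs
begin

text \<open>Rotating the device outputs by \<open>T\<^sub>s\<^sup>T\<close> and normalising the i-th rotated output by
  \<open>(\<sigma>\<^sub>0\<^sup>2 + \<sigma>\<^sub>x\<^sup>2 \<rho>\<^sub>i\<^sup>2)\<^sup>1\<^sup>/\<^sup>2\<close> expresses the \<open>M\<^sub>1 N\<^sub>b\<close> whitened components as orthonormal
  combinations of the i.i.d. standard normal sources \<open>x[n]\<^sub>k\<close>, \<open>w\<^sub>m[n]\<^sub>j\<close>; here the
  orthonormality of the eigenvectors \<open>u\<^sub>i\<close> of \<open>H H\<^sup>T\<close> is what makes signal and noise parts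
  of different components uncorrelated. By rotation invariance of the standard Gaussian the
  whitened components are again i.i.d. standard normal, and the test statistic is their sum of
  squares weighted by \<open>(\<sigma>\<^sub>0\<^sup>2 + \<sigma>\<^sub>x\<^sup>2 \<rho>\<^sub>i\<^sup>2) / \<sigma>\<^sub>0\<^sup>2\<close>. Since \<open>\<rho>\<^sub>i\<^sup>2\<close> decreases, the weights lie
  between those for \<open>i = M\<^sub>1\<close> and \<open>i = 1\<close>, which sandwiches the statistic between multiples of
  a \<open>\<chi>\<^sup>2(M\<^sub>1 N\<^sub>b)\<close> variable; under \<open>H\<^sub>0\<close> (\<open>\<sigma>\<^sub>x = 0\<close>) all weights are 1.

  Rotation invariance on \<open>\<real>\<^sup>I\<close> is reduced by Givens rotations to the planar case, where a
  rotation is a product of three shears; the \<open>\<chi>\<^sup>2\<close> law of a sum of squares follows by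
  convolving densities.\<close>

section \<open>Planar rotations preserve the standard Gaussian\<close>

lemma lborel_pair_shear_snd:
  fixes f :: "real \<Rightarrow> real"
  assumes [measurable]: "f \<in> borel_measurable borel"
  shows "distr (lborel \<Otimes>\<^sub>M lborel) (lborel \<Otimes>\<^sub>M lborel) (\<lambda>(x, y). (x, y + f x)) = lborel \<Otimes>\<^sub>M lborel"
proof (rule measure_eqI)
  fix A assume "A \<in> sets (distr (lborel \<Otimes>\<^sub>M lborel) (lborel \<Otimes>\<^sub>M lborel) (\<lambda>(x, y). (x, y + f x)))"
  then have A: "A \<in> sets (lborel \<Otimes>\<^sub>M lborel)" by simp
  let ?g = "\<lambda>(x::real, y::real). (x, y + f x)"
  have "emeasure (distr (lborel \<Otimes>\<^sub>M lborel) (lborel \<Otimes>\<^sub>M lborel) ?g) A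
      = (\<integral>\<^sup>+x. emeasure lborel (Pair x -` (?g -` A \<inter> space (lborel \<Otimes>\<^sub>M lborel))) \<partial>lborel)"
  proof -
    have g: "?g \<in> measurable (lborel \<Otimes>\<^sub>M lborel) (lborel \<Otimes>\<^sub>M lborel)" by measurable
    show ?thesis
      using A measurable_sets[OF g A] by (simp add: emeasure_distr[OF g] lborel.emeasure_pair_measure_alt del: vimage_Int)
  qed
  also have "\<dots> = (\<integral>\<^sup>+x. emeasure lborel (Pair x -` A) \<partial>lborel)"
  proof (rule nn_integral_cong)
    fix x :: real
    have sA: "Pair x -` A \<in> sets borel"
      using A by (metis sets_Pair1 sets_lborel)
    have "Pair x -` (?g -` A \<inter> space (lborel \<Otimes>\<^sub>M lborel)) = (+) (f x) -` (Pair x -` A) \<inter> space lborel"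
      by (auto simp: space_pair_measure add.commute)
    also have "emeasure lborel \<dots> = emeasure (distr lborel borel ((+) (f x))) (Pair x -` A)"
      using sA by (subst emeasure_distr) auto
    also have "\<dots> = emeasure lborel (Pair x -` A)"
      by (simp add: lborel_distr_plus)
    finally show "emeasure lborel (Pair x -` (?g -` A \<inter> space (lborel \<Otimes>\<^sub>M lborel))) = emeasure lborel (Pair x -` A)" .
  qed
  also have "\<dots> = emeasure (lborel \<Otimes>\<^sub>M lborel) A"
    using A by (rule lborel.emeasure_pair_measure_alt[symmetric])
  finally show "emeasure (distr (lborel \<Otimes>\<^sub>M lborel) (lborel \<Otimes>\<^sub>M lborel) ?g) A = emeasure (lborel \<Otimes>\<^sub>M lborel) A" .
qed simp

lemma lborel_pair_shear_fst:
  fixes f :: "real \<Rightarrow> real"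
  assumes [measurable]: "f \<in> borel_measurable borel"
  shows "distr (lborel \<Otimes>\<^sub>M lborel) (lborel \<Otimes>\<^sub>M lborel) (\<lambda>(x, y). (x + f y, y)) = lborel \<Otimes>\<^sub>M lborel"
proof -
  let ?L = "lborel \<Otimes>\<^sub>M lborel :: (real \<times> real) measure"
  let ?swap = "\<lambda>(x::real, y::real). (y, x)"
  have swap: "distr ?L ?L ?swap = ?L"
    by (metis lborel_pair.distr_pair_swap)
  have "(\<lambda>(x, y). (x + f y, y)) = ?swap \<circ> (\<lambda>(x, y). (x, y + f x)) \<circ> ?swap"
    by (auto simp: fun_eq_iff)
  moreover have "distr ?L ?L (?swap \<circ> (\<lambda>(x, y). (x, y + f x)) \<circ> ?swap)
      = distr (distr (distr ?L ?L ?swap) ?L (\<lambda>(x, y). (x, y + f x))) ?L ?swap"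
    by (simp add: distr_distr comp_assoc)
  ultimately have "distr ?L ?L (\<lambda>(x, y). (x + f y, y)) = distr (distr (distr ?L ?L ?swap) ?L (\<lambda>(x, y). (x, y + f x))) ?L ?swap"
    by simp
  then show ?thesis
    by (simp add: swap lborel_pair_shear_snd)
qed

lemma lborel_pair_rotation:
  fixes c s :: real
  assumes cs: "c\<^sup>2 + s\<^sup>2 = 1"
  shows "distr (lborel \<Otimes>\<^sub>M lborel) (lborel \<Otimes>\<^sub>M lborel) (\<lambda>(x, y). (c * x + s * y, - s * x + c * y))
    = lborel \<Otimes>\<^sub>M lborel"
proof -
  let ?L = "lborel \<Otimes>\<^sub>M lborel :: (real \<times> real) measure"
  have rot_nonzero: "distr ?L ?L (\<lambda>(x, y). (c * x + s * y, - s * x + c * y)) = ?L"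
    if cs: "c\<^sup>2 + s\<^sup>2 = 1" and s: "s \<noteq> 0" for c s :: real
  proof -
    \<comment> \<open>the rotation is the product of three shears, with t = tan(\<theta>/2)\<close>
    define t where "t = (1 - c) / s"
    let ?A = "\<lambda>(x::real, y::real). (x + t * y, y)"
    let ?B = "\<lambda>(x::real, y::real). (x, y + (- s) * x)"
    have ts: "1 - t * s = c" using s by (simp add: t_def)
    have "t * (2 - t * s) = (1 - c\<^sup>2) / s"
      using s by (simp add: t_def power2_eq_square field_simps)
    also have "\<dots> = s"
      using cs s by (simp add: power2_eq_square flip: cs)
    finally have tt: "2 * t - t * s * t = s"
      by (simp add: algebra_simps)
    have "(\<lambda>(x, y). (c * x + s * y, - s * x + c * y)) = ?A \<circ> ?B \<circ> ?A"
    proof (intro ext, clarsimp)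
      fix x y :: real
      have "x + t * y + t * (y - s * (x + t * y)) = (1 - t * s) * x + (2 * t - t * s * t) * y"
        by (simp add: algebra_simps)
      moreover have "y - s * (x + t * y) = (1 - t * s) * y - s * x"
        by (simp add: algebra_simps)
      ultimately show "c * x + s * y = x + t * y + t * (y - s * (x + t * y)) \<and> c * y - s * x = y - s * (x + t * y)"
        using ts tt by simp
    qed
    moreover have "distr ?L ?L (?A \<circ> ?B \<circ> ?A) = distr (distr (distr ?L ?L ?A) ?L ?B) ?L ?A"
      by (simp add: distr_distr comp_assoc)
    ultimately show ?thesis
      using lborel_pair_shear_fst[of "\<lambda>y. t * y"] lborel_pair_shear_snd[of "\<lambda>x. (- s) * x"] by simp
  qed
  show ?thesis
  proof (cases "s = 0")
    case True
    with cs have "c = 1 \<or> c = -1" by (simp add: power2_eq_1_iff)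
    then show ?thesis
    proof
      assume "c = 1"
      then have "(\<lambda>(x, y). (c * x + s * y, - s * x + c * y)) = (\<lambda>z. z)"
        using True by auto
      then show ?thesis by (simp add: distr_id)
    next
      assume c: "c = -1"
      let ?R = "\<lambda>(x::real, y::real). (0 * x + 1 * y, - 1 * x + 0 * y)"
      have "(\<lambda>(x, y). (c * x + s * y, - s * x + c * y)) = ?R \<circ> ?R"
        using True c by auto
      moreover have "distr ?L ?L (?R \<circ> ?R) = distr (distr ?L ?L ?R) ?L ?R"
        by (simp add: distr_distr)
      ultimately show ?thesis
        using rot_nonzero[of 0 1] by simp
    qed
  qed (use rot_nonzero cs in simp)
qed

definition stdN :: "real measure" where
  "stdN = density lborel (\<lambda>x. ennreal (std_normal_density x))"

lemma sets_stdN [simp, measurable_cong]: "sets stdN = sets borel"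
  by (simp add: stdN_def)

lemma space_stdN [simp]: "space stdN = UNIV"
  by (simp add: stdN_def)

lemma prob_space_stdN: "prob_space stdN"
  unfolding stdN_def by (rule prob_space_normal_density) simp

lemma stdN_pair_rotation:
  fixes c s :: real
  assumes cs: "c\<^sup>2 + s\<^sup>2 = 1"
  shows "distr (stdN \<Otimes>\<^sub>M stdN) (stdN \<Otimes>\<^sub>M stdN) (\<lambda>(x, y). (c * x + s * y, - s * x + c * y)) = stdN \<Otimes>\<^sub>M stdN"
proof -
  let ?L = "lborel \<Otimes>\<^sub>M lborel :: (real \<times> real) measure"
  let ?\<rho> = "\<lambda>(x::real, y::real). (c * x + s * y, - s * x + c * y)"
  let ?f = "\<lambda>(x::real, y::real). ennreal (std_normal_density x) * ennreal (std_normal_density y)"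
  have NN: "stdN \<Otimes>\<^sub>M stdN = density ?L ?f"
    unfolding stdN_def
    by (rule pair_measure_density)
       (auto intro: sigma_finite_lborel prob_space_imp_sigma_finite[OF prob_space_stdN[unfolded stdN_def]])
  have "?f (?\<rho> z) = ?f z" for z
  proof (cases z)
    case (Pair x y)
    have "(c * x + s * y)\<^sup>2 + (- s * x + c * y)\<^sup>2 = (c\<^sup>2 + s\<^sup>2) * (x\<^sup>2 + y\<^sup>2)"
      by (simp add: power2_eq_square algebra_simps)
    then have "exp (- ((c * x + s * y)\<^sup>2 + (- s * x + c * y)\<^sup>2) / 2) = exp (- (x\<^sup>2 + y\<^sup>2) / 2)"
      using cs by simp
    then have "std_normal_density (c * x + s * y) * std_normal_density (- s * x + c * y)
        = std_normal_density x * std_normal_density y"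
      by (simp add: std_normal_density_def exp_add[symmetric] field_simps)
    then show ?thesis using Pair by (simp add: ennreal_mult[symmetric])
  qed
  then have "distr (density ?L ?f) ?L ?\<rho> = density ?L ?f"
    using lborel_pair_rotation[OF cs] density_distr[of ?f ?L ?\<rho> ?L] by simp
  then show ?thesis unfolding NN
    by (subst distr_cong[of _ _ _ ?L]) auto
qed

section \<open>Orthonormal images of standard Gaussian vectors\<close>

lemma measurable_pair_pair_PiM:
  "(\<lambda>((a, b), Y). \<lambda>k\<in>I. if k = i then a else if k = j then b else Y k)
    \<in> measurable ((M \<Otimes>\<^sub>M M) \<Otimes>\<^sub>M PiM (I - {i, j}) (\<lambda>_. M)) (PiM I (\<lambda>_. M))"
proof -
  have "(\<lambda>z. \<lambda>k\<in>I. if k = i then fst (fst z) else if k = j then snd (fst z) else snd z k)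
      \<in> measurable ((M \<Otimes>\<^sub>M M) \<Otimes>\<^sub>M PiM (I - {i, j}) (\<lambda>_. M)) (PiM I (\<lambda>_. M))"
  proof (rule measurable_restrict)
    fix k assume "k \<in> I"
    then show "(\<lambda>z. if k = i then fst (fst z) else if k = j then snd (fst z) else snd z k)
        \<in> measurable ((M \<Otimes>\<^sub>M M) \<Otimes>\<^sub>M PiM (I - {i, j}) (\<lambda>_. M)) M"
      by (cases "k = i"; cases "k = j") simp_all
  qed
  then show ?thesis
    by (simp add: case_prod_beta')
qed

lemma distr_pair_pair_PiM_eq_PiM:
  fixes M :: "'b measure" and I :: "'i set"
  assumes M: "prob_space M" and fin: "finite I" and ij: "i \<in> I" "j \<in> I" "i \<noteq> j"
  shows "distr ((M \<Otimes>\<^sub>M M) \<Otimes>\<^sub>M PiM (I - {i, j}) (\<lambda>_. M)) (PiM I (\<lambda>_. M))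
      (\<lambda>((a, b), Y). \<lambda>k\<in>I. if k = i then a else if k = j then b else Y k) = PiM I (\<lambda>_. M)"
    (is "distr ?Q _ ?\<Phi> = _")
proof (rule product_sigma_finite.PiM_eqI)
  interpret M: prob_space M by fact
  interpret PS: product_prob_space "\<lambda>_::'i. M"
    by (simp add: product_prob_space_def product_sigma_finite_def M.sigma_finite_measure product_prob_space_axioms_def M.prob_space_axioms)
  interpret K: prob_space "PiM (I - {i, j}) (\<lambda>_. M)" by (rule prob_space_PiM) (rule M)
  show "product_sigma_finite (\<lambda>_. M)" ..
  show "finite I" by fact
  show "sets (distr ?Q (PiM I (\<lambda>_. M)) ?\<Phi>) = sets (PiM I (\<lambda>_. M))" by simp
  fix A assume A: "\<And>k. k \<in> I \<Longrightarrow> A k \<in> sets M"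
  have m\<Phi>: "?\<Phi> \<in> measurable ?Q (PiM I (\<lambda>_. M))"
    by (rule measurable_pair_pair_PiM)
  have "?\<Phi> -` Pi\<^sub>E I A \<inter> space ?Q = (A i \<times> A j) \<times> Pi\<^sub>E (I - {i, j}) A"
  proof (intro set_eqI iffI)
    fix z assume z: "z \<in> ?\<Phi> -` Pi\<^sub>E I A \<inter> space ?Q"
    obtain a b Y where zz: "z = ((a, b), Y)" by (metis prod.collapse)
    have P: "(\<lambda>k\<in>I. if k = i then a else if k = j then b else Y k) \<in> Pi\<^sub>E I A"
      using z zz by simp
    have "Y k \<in> A k" if "k \<in> I - {i, j}" for k
      using that PiE_mem[OF P, of k] by (auto)
    moreover have "Y \<in> extensional (I - {i, j})"
      using z zz ij A[THEN sets.sets_into_space] by (auto simp: space_pair_measure space_PiM PiE_def Pi_def)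
    ultimately show "z \<in> (A i \<times> A j) \<times> Pi\<^sub>E (I - {i, j}) A"
      using zz ij PiE_mem[OF P, of i] PiE_mem[OF P, of j] by (simp add: PiE_def Pi_def)
  next
    fix z assume z: "z \<in> (A i \<times> A j) \<times> Pi\<^sub>E (I - {i, j}) A"
    obtain a b Y where zz: "z = ((a, b), Y)" by (metis prod.collapse)
    then have "(\<lambda>k\<in>I. if k = i then a else if k = j then b else Y k) \<in> Pi\<^sub>E I A"
      using z ij by (auto simp: PiE_def Pi_def)
    moreover have "z \<in> space ?Q"
      using z zz ij A[THEN sets.sets_into_space] by (auto simp: space_pair_measure space_PiM PiE_def Pi_def)
    ultimately show "z \<in> ?\<Phi> -` Pi\<^sub>E I A \<inter> space ?Q"
      using zz by simp
  qed
  then have "emeasure (distr ?Q (PiM I (\<lambda>_. M)) ?\<Phi>) (Pi\<^sub>E I A) = emeasure ?Q ((A i \<times> A j) \<times> Pi\<^sub>E (I - {i, j}) A)"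
    using A m\<Phi> fin by (subst emeasure_distr) (auto intro!: sets_PiM_I_finite)
  also have "\<dots> = emeasure (M \<Otimes>\<^sub>M M) (A i \<times> A j) * emeasure (PiM (I - {i, j}) (\<lambda>_. M)) (Pi\<^sub>E (I - {i, j}) A)"
    using A ij fin by (intro K.emeasure_pair_measure_Times) (auto intro!: sets_PiM_I_finite)
  also have "\<dots> = emeasure M (A i) * emeasure M (A j) * (\<Prod>k\<in>I - {i, j}. emeasure M (A k))"
  proof -
    have "emeasure (M \<Otimes>\<^sub>M M) (A i \<times> A j) = emeasure M (A i) * emeasure M (A j)"
      using A ij by (intro M.emeasure_pair_measure_Times) auto
    moreover have "emeasure (PiM (I - {i, j}) (\<lambda>_. M)) (Pi\<^sub>E (I - {i, j}) A) = (\<Prod>k\<in>I - {i, j}. emeasure M (A k))"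
      using A fin by (intro PS.emeasure_PiM) auto
    ultimately show ?thesis by simp
  qed
  also have "\<dots> = (\<Prod>k\<in>I. emeasure M (A k))"
  proof -
    have "(\<Prod>k\<in>I - {i}. emeasure M (A k)) = emeasure M (A j) * (\<Prod>k\<in>I - {i} - {j}. emeasure M (A k))"
      using fin ij by (intro prod.remove) auto
    moreover have "I - {i} - {j} = I - {i, j}" by auto
    ultimately show ?thesis
      using fin ij by (simp add: prod.remove[of I i] mult.assoc)
  qed
  finally show "emeasure (distr ?Q (PiM I (\<lambda>_. M)) ?\<Phi>) (Pi\<^sub>E I A) = (\<Prod>k\<in>I. emeasure M (A k))" .
qed

abbreviation stdN_PiM :: "'i set \<Rightarrow> ('i \<Rightarrow> real) measure" where
  "stdN_PiM I \<equiv> PiM I (\<lambda>_. stdN)"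

lemma prob_space_stdN_PiM: "prob_space (stdN_PiM I)"
  by (rule prob_space_PiM) (rule prob_space_stdN)

lemma stdN_PiM_givens_invariant:
  fixes c s :: real
  assumes fin: "finite I" and ij: "i \<in> I" "j \<in> I" "i \<noteq> j" and cs: "c\<^sup>2 + s\<^sup>2 = 1"
  shows "distr (stdN_PiM I) (stdN_PiM I)
      (\<lambda>x. \<lambda>k\<in>I. if k = i then c * x i + s * x j else if k = j then - s * x i + c * x j else x k) = stdN_PiM I"
proof -
  let ?Q = "(stdN \<Otimes>\<^sub>M stdN) \<Otimes>\<^sub>M stdN_PiM (I - {i, j})"
  let ?\<Phi> = "\<lambda>((a, b), Y). \<lambda>k\<in>I. if k = i then a else if k = j then b else Y k"
  let ?R = "\<lambda>x. \<lambda>k\<in>I. if k = i then c * x i + s * x j else if k = j then - s * x i + c * x j else x k"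
  let ?rot = "\<lambda>(a, b). (c * a + s * b, - s * a + c * b)"
  let ?\<rho> = "\<lambda>(x, Y). (?rot x, Y)"
  have \<Phi>: "distr ?Q (stdN_PiM I) ?\<Phi> = stdN_PiM I"
    by (rule distr_pair_pair_PiM_eq_PiM[OF prob_space_stdN fin ij])
  have m\<Phi>: "?\<Phi> \<in> measurable ?Q (stdN_PiM I)"
    by (rule measurable_pair_pair_PiM)
  have mR: "?R \<in> measurable (stdN_PiM I) (stdN_PiM I)"
    by (rule measurable_restrict) (use ij in measurable)
  have m\<rho>: "?\<rho> \<in> measurable ?Q ?Q" by measurable
  have \<rho>: "distr ?Q ?Q ?\<rho> = ?Q"
  proof -
    have "distr (stdN \<Otimes>\<^sub>M stdN) (stdN \<Otimes>\<^sub>M stdN) ?rot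
        \<Otimes>\<^sub>M distr (stdN_PiM (I - {i, j})) (stdN_PiM (I - {i, j})) (\<lambda>Y. Y) = distr ?Q ?Q ?\<rho>"
      by (rule pair_measure_distr) (auto simp: distr_id intro!: prob_space_imp_sigma_finite prob_space_stdN_PiM)
    then show ?thesis using stdN_pair_rotation[OF cs] by (simp add: distr_id)
  qed
  have "?R \<circ> ?\<Phi> = ?\<Phi> \<circ> ?\<rho>"
    using ij by (auto simp: fun_eq_iff)
  then have "distr ?Q (stdN_PiM I) (?R \<circ> ?\<Phi>) = distr (distr ?Q ?Q ?\<rho>) (stdN_PiM I) ?\<Phi>"
    using m\<Phi> m\<rho> by (simp add: distr_distr)
  moreover have "distr ?Q (stdN_PiM I) (?R \<circ> ?\<Phi>) = distr (stdN_PiM I) (stdN_PiM I) ?R"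
    using mR m\<Phi> \<Phi> by (simp add: distr_distr[symmetric])
  ultimately show ?thesis
    using \<rho> \<Phi> by simp
qed

lemma sum_orthonormal_cols_inner:
  fixes q :: "'i \<Rightarrow> 'l \<Rightarrow> real"
  assumes orth: "\<And>l l'. l \<in> B \<Longrightarrow> l' \<in> B \<Longrightarrow> (\<Sum>i\<in>A. q i l * q i l') = (if l = l' then 1 else 0)"
    and fin: "finite B"
  shows "(\<Sum>i\<in>A. (\<Sum>l\<in>B. q i l * a l) * (\<Sum>l\<in>B. q i l * b l)) = (\<Sum>l\<in>B. a l * b l)"
proof -
  have "(\<Sum>i\<in>A. (\<Sum>l\<in>B. q i l * a l) * (\<Sum>l\<in>B. q i l * b l))
      = (\<Sum>i\<in>A. \<Sum>l\<in>B. \<Sum>l'\<in>B. (a l * b l') * (q i l * q i l'))"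
    unfolding sum_product by (intro sum.cong refl) (simp add: algebra_simps)
  also have "\<dots> = (\<Sum>l\<in>B. \<Sum>l'\<in>B. (a l * b l') * (\<Sum>i\<in>A. q i l * q i l'))"
    by (subst sum.swap) (simp add: sum.swap[of _ A] sum_distrib_left)
  also have "\<dots> = (\<Sum>l\<in>B. a l * b l)"
    using fin by (simp add: orth if_distrib cong: if_cong)
  finally show ?thesis .
qed

lemma sum_orthonormal_cols_transpose:
  fixes q :: "'i \<Rightarrow> 'l \<Rightarrow> real"
  assumes orth: "\<And>l l'. l \<in> B \<Longrightarrow> l' \<in> B \<Longrightarrow> (\<Sum>i\<in>A. q i l * q i l') = (if l = l' then 1 else 0)"
    and fin: "finite B" and l: "l \<in> B"
  shows "(\<Sum>i\<in>A. q i l * (\<Sum>l'\<in>B. q i l' * b l')) = b l"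
proof -
  have "(\<Sum>i\<in>A. q i l * (\<Sum>l'\<in>B. q i l' * b l')) = (\<Sum>l'\<in>B. b l' * (\<Sum>i\<in>A. q i l * q i l'))"
    by (simp add: sum_distrib_left sum.swap[of _ A] algebra_simps)
  also have "\<dots> = b l"
    using fin l by (simp add: orth if_distrib cong: if_cong)
  finally show ?thesis .
qed

lemma sum_mat_mult_apply:
  fixes g :: "'k \<Rightarrow> 'm \<Rightarrow> real" and q :: "'m \<Rightarrow> 'l \<Rightarrow> real"
  shows "(\<Sum>l\<in>B. (\<Sum>m\<in>A. g k m * q m l) * x l) = (\<Sum>m\<in>A. g k m * (\<Sum>l\<in>B. q m l * x l))"
  by (simp add: sum_distrib_left sum_distrib_right sum.swap[of _ A] mult.assoc)

definition mat_vec :: "'i set \<Rightarrow> ('i \<Rightarrow> 'i \<Rightarrow> real) \<Rightarrow> ('i \<Rightarrow> real) \<Rightarrow> ('i \<Rightarrow> real)" where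
  "mat_vec I q x = (\<lambda>k\<in>I. \<Sum>l\<in>I. q k l * x l)"

lemma measurable_mat_vec [measurable]: "finite I \<Longrightarrow> mat_vec I q \<in> measurable (stdN_PiM I) (stdN_PiM I)"
  unfolding mat_vec_def by (rule measurable_restrict) measurable

definition stdN_invariant_orthogonal :: "'i set \<Rightarrow> ('i \<Rightarrow> 'i \<Rightarrow> real) \<Rightarrow> bool" where
  "stdN_invariant_orthogonal I q \<longleftrightarrow>
     (\<forall>l\<in>I. \<forall>l'\<in>I. (\<Sum>i\<in>I. q i l * q i l') = (if l = l' then 1 else 0))
     \<and> distr (stdN_PiM I) (stdN_PiM I) (mat_vec I q) = stdN_PiM I"

lemma stdN_invariant_orthogonal_id:
  assumes fin: "finite I"
  shows "stdN_invariant_orthogonal I (\<lambda>k l. if k = l then 1 else 0)"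
proof -
  have delta: "(if k = l then 1 else 0) * (x l :: real) = (if k = l then x l else 0)" for k l x
    by simp
  have "mat_vec I (\<lambda>k l. if k = l then 1 else 0) x = x" if "x \<in> space (stdN_PiM I)" for x
    using that fin by (auto simp: mat_vec_def space_PiM PiE_def extensional_def delta)
  then have "distr (stdN_PiM I) (stdN_PiM I) (mat_vec I (\<lambda>k l. if k = l then 1 else 0)) = stdN_PiM I"
    by (simp add: distr_cong[of _ _ _ _ _ "\<lambda>x. x"] distr_id)
  moreover have "(\<Sum>i\<in>I. (if i = l then 1 else 0) * (if i = l' then 1 else 0)) = (if l = l' then 1 else (0::real))"
    if "l \<in> I" for l l'
  proof -
    have "(if i = l then 1 else 0) * (if i = l' then 1 else 0) = (if i = l then (if l = l' then 1 else 0) else (0::real))"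
      for i by simp
    then show ?thesis
      using fin that by (simp add: sum.delta')
  qed
  ultimately show ?thesis
    by (simp add: stdN_invariant_orthogonal_def)
qed

lemma stdN_invariant_orthogonal_mult:
  assumes fin: "finite I" and q: "stdN_invariant_orthogonal I q" and g: "stdN_invariant_orthogonal I g"
  shows "stdN_invariant_orthogonal I (\<lambda>k l. \<Sum>m\<in>I. g k m * q m l)"
proof -
  have oq: "\<And>l l'. l \<in> I \<Longrightarrow> l' \<in> I \<Longrightarrow> (\<Sum>i\<in>I. q i l * q i l') = (if l = l' then 1 else 0)"
    and og: "\<And>l l'. l \<in> I \<Longrightarrow> l' \<in> I \<Longrightarrow> (\<Sum>i\<in>I. g i l * g i l') = (if l = l' then 1 else 0)"
    using q g by (simp_all add: stdN_invariant_orthogonal_def)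
  have "mat_vec I (\<lambda>k l. \<Sum>m\<in>I. g k m * q m l) = mat_vec I g \<circ> mat_vec I q"
    by (auto simp: fun_eq_iff mat_vec_def sum_mat_mult_apply)
  then have "distr (stdN_PiM I) (stdN_PiM I) (mat_vec I (\<lambda>k l. \<Sum>m\<in>I. g k m * q m l))
      = distr (distr (stdN_PiM I) (stdN_PiM I) (mat_vec I q)) (stdN_PiM I) (mat_vec I g)"
    using fin by (simp add: distr_distr)
  then show ?thesis
    using q g sum_orthonormal_cols_inner[OF og fin] oq
    by (simp add: stdN_invariant_orthogonal_def)
qed

definition givens_mat :: "'i \<Rightarrow> 'i \<Rightarrow> real \<Rightarrow> real \<Rightarrow> 'i \<Rightarrow> 'i \<Rightarrow> real" where
  "givens_mat i j c s k l =
     (if k = i then (if l = i then c else if l = j then s else 0)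
      else if k = j then (if l = i then - s else if l = j then c else 0)
      else if k = l then 1 else 0)"

lemma sum_givens_mat_apply:
  assumes fin: "finite I" and ij: "i \<in> I" "j \<in> I" "i \<noteq> j" and k: "k \<in> I"
  shows "(\<Sum>l\<in>I. givens_mat i j c s k l * x l)
    = (if k = i then c * x i + s * x j else if k = j then - s * x i + c * x j else x k)"
proof -
  define K where "K = I - {i, j}"
  have I: "I = insert i (insert j K)" and iK: "i \<notin> K" "j \<notin> K" and finK: "finite K"
    using ij fin by (auto simp: K_def)
  have "(\<Sum>l\<in>K. givens_mat i j c s k l * x l) = (\<Sum>l\<in>K. if k = l then x l else 0)"
    using iK by (intro sum.cong) (auto simp: givens_mat_def)
  also have "\<dots> = (if k \<in> K then x k else 0)"
    using finK by (simp add: sum.delta)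
  finally show ?thesis
    using k ij iK finK by (auto simp: I givens_mat_def)
qed

lemma stdN_invariant_orthogonal_givens:
  fixes c s :: real
  assumes fin: "finite I" and ij: "i \<in> I" "j \<in> I" "i \<noteq> j" and cs: "c\<^sup>2 + s\<^sup>2 = 1"
  shows "stdN_invariant_orthogonal I (givens_mat i j c s)"
proof -
  have "mat_vec I (givens_mat i j c s)
      = (\<lambda>x. \<lambda>k\<in>I. if k = i then c * x i + s * x j else if k = j then - s * x i + c * x j else x k)"
    using fin ij by (auto simp: fun_eq_iff mat_vec_def sum_givens_mat_apply)
  moreover have "(\<Sum>k\<in>I. givens_mat i j c s k l * givens_mat i j c s k l') = (if l = l' then 1 else 0)"
    if "l \<in> I" "l' \<in> I" for l l'
  proof -
    define K where "K = I - {i, j}"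
    have I: "I = insert i (insert j K)" and iK: "i \<notin> K" "j \<notin> K" and finK: "finite K"
      using ij fin by (auto simp: K_def)
    have "(\<Sum>k\<in>K. givens_mat i j c s k l * givens_mat i j c s k l') = (\<Sum>k\<in>K. if k = l then (if l = l' then 1 else 0) else 0)"
      using iK by (intro sum.cong) (auto simp: givens_mat_def)
    also have "\<dots> = (if l \<in> K \<and> l = l' then 1 else 0)"
      using finK by (auto simp: sum.delta')
    finally have "(\<Sum>k\<in>K. givens_mat i j c s k l * givens_mat i j c s k l') = (if l \<in> K \<and> l = l' then 1 else 0)" .
    moreover have "c * c + s * s = 1"
      using cs by (simp add: power2_eq_square)
    ultimately show ?thesis
      using that ij iK finK I by (auto simp: givens_mat_def algebra_simps)
  qed
  ultimately show ?thesis
    using stdN_PiM_givens_invariant[OF fin ij cs] by (simp add: stdN_invariant_orthogonal_def)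
qed
lemma givens_angle_exists:
  fixes a b :: real
  obtains c s where "c\<^sup>2 + s\<^sup>2 = 1" and "- s * a + c * b = 0"
proof (cases "a\<^sup>2 + b\<^sup>2 = 0")
  case True
  then have "b = 0"
    by (simp add: add_nonneg_eq_0_iff)
  then show ?thesis
    by (intro that[of 1 0]) simp_all
next
  case False
  define r where "r = sqrt (a\<^sup>2 + b\<^sup>2)"
  have "r \<noteq> 0" "r\<^sup>2 = a\<^sup>2 + b\<^sup>2"
    using False by (simp_all add: r_def)
  then show ?thesis
    using False by (intro that[of "a / r" "b / r"]) (simp_all add: power_divide field_simps add_divide_distrib[symmetric])
qed

lemma stdN_invariant_orthogonal_elimination:
  fixes v :: "'i \<Rightarrow> real"
  assumes fin: "finite I" and i0: "i0 \<in> I" and S: "S \<subseteq> I - {i0}"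
  obtains q where "stdN_invariant_orthogonal I q"
    and "\<forall>i\<in>S. (\<Sum>l\<in>I. q i l * v l) = 0" and "\<forall>i\<in>I - S - {i0}. (\<Sum>l\<in>I. q i l * v l) = v i"
proof -
  have "finite S"
    using S fin by (meson finite_Diff finite_subset)
  then have "\<exists>q. stdN_invariant_orthogonal I q \<and> (\<forall>i\<in>S. (\<Sum>l\<in>I. q i l * v l) = 0)
      \<and> (\<forall>i\<in>I - S - {i0}. (\<Sum>l\<in>I. q i l * v l) = v i)"
    using S
  proof (induction S rule: finite_induct)
    case empty
    have delta: "(if k = l then 1 else 0) * (x l :: real) = (if k = l then x l else 0)" for k l x
      by simp
    show ?case
      using stdN_invariant_orthogonal_id[OF fin] fin
      by (intro exI[of _ "\<lambda>k l. if k = l then 1 else 0"]) (simp add: delta sum.delta)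
  next
    case (insert j S)
    define w where "w q i = (\<Sum>l\<in>I. q i l * v l)" for q :: "'i \<Rightarrow> 'i \<Rightarrow> real" and i
    obtain q where q: "stdN_invariant_orthogonal I q" and zero: "\<forall>i\<in>S. w q i = 0"
      and keep: "\<forall>i\<in>I - S - {i0}. w q i = v i"
      using insert by (auto simp: w_def)
    have j: "j \<in> I" "j \<noteq> i0"
      using insert by auto
    \<comment> \<open>a Givens rotation in the (i0, j)-plane kills the j-th coordinate of q v\<close>
    obtain c s where cs: "c\<^sup>2 + s\<^sup>2 = 1" and kill: "- s * w q i0 + c * w q j = 0"
      by (rule givens_angle_exists)
    define q' where "q' k l = (\<Sum>m\<in>I. givens_mat i0 j c s k m * q m l)" for k l
    have "stdN_invariant_orthogonal I q'"
      unfolding q'_def using fin q stdN_invariant_orthogonal_givens[OF fin i0 j(1) j(2)[symmetric] cs]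
      by (rule stdN_invariant_orthogonal_mult)
    moreover have rot: "w q' k = (if k = i0 then c * w q i0 + s * w q j else if k = j then - s * w q i0 + c * w q j else w q k)"
      if "k \<in> I" for k
      unfolding w_def q'_def sum_mat_mult_apply
      using sum_givens_mat_apply[OF fin i0 j(1) j(2)[symmetric] that] .
    moreover have "w q' i = 0" if "i \<in> insert j S" for i
    proof -
      have "i \<in> I" "i \<noteq> i0"
        using that insert.prems by auto
      then show ?thesis
        using that insert.hyps(2) zero kill rot[of i] by (cases "i = j") auto
    qed
    moreover have "w q' i = v i" if "i \<in> I - insert j S - {i0}" for i
      using that keep rot[of i] by auto
    ultimately have "stdN_invariant_orthogonal I q' \<and> (\<forall>i\<in>insert j S. w q' i = 0) \<and> (\<forall>i\<in>I - insert j S - {i0}. w q' i = v i)"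
      by blast
    then show ?case
      by (auto simp: w_def)
  qed
  then show ?thesis
    using that by blast
qed

lemma stdN_invariant_orthogonal_row:
  fixes v :: "'i \<Rightarrow> real"
  assumes fin: "finite I" and i0: "i0 \<in> I" and nv: "(\<Sum>i\<in>I. v i * v i) = 1"
  shows "\<exists>q \<sigma>. stdN_invariant_orthogonal I q \<and> (\<sigma> = 1 \<or> \<sigma> = -1) \<and> (\<forall>l\<in>I. q i0 l = \<sigma> * v l)"
proof -
  obtain q where q: "stdN_invariant_orthogonal I q" and z: "\<forall>i\<in>I - {i0}. (\<Sum>l\<in>I. q i l * v l) = 0"
    using stdN_invariant_orthogonal_elimination[OF fin i0 subset_refl, of v] by metis
  have oq: "\<And>l l'. l \<in> I \<Longrightarrow> l' \<in> I \<Longrightarrow> (\<Sum>i\<in>I. q i l * q i l') = (if l = l' then 1 else 0)"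
    using q by (simp add: stdN_invariant_orthogonal_def)
  define w where "w i = (\<Sum>l\<in>I. q i l * v l)" for i
  have "(\<Sum>i\<in>I. w i * w i) = 1" using sum_orthonormal_cols_inner[OF oq fin, of v v] nv by (simp add: w_def)
  moreover have "(\<Sum>i\<in>I. w i * w i) = w i0 * w i0"
    using z fin i0 by (subst sum.remove[of I i0]) (auto simp: w_def)
  ultimately have \<sigma>: "w i0 = 1 \<or> w i0 = -1"
    by (simp add: square_eq_1_iff)
  have "v l = q i0 l * w i0" if "l \<in> I" for l
  proof -
    have "v l = (\<Sum>i\<in>I. q i l * w i)" unfolding w_def using sum_orthonormal_cols_transpose[OF oq fin that] by simp
    also have "\<dots> = q i0 l * w i0" using z fin i0 by (subst sum.remove[of I i0]) (auto simp: w_def)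
    finally show ?thesis .
  qed
  then have "\<forall>l\<in>I. q i0 l = w i0 * v l" using \<sigma> by auto
  then show ?thesis using q \<sigma> by blast
qed

lemma stdN_sign_invariant:
  assumes "\<sigma> = 1 \<or> \<sigma> = (-1::real)"
  shows "distr stdN stdN (\<lambda>a. \<sigma> * a) = stdN"
  using assms
proof
  assume "\<sigma> = 1" then show ?thesis by (simp add: distr_id)
next
  assume \<sigma>: "\<sigma> = -1"
  have "lborel = density (distr lborel borel (\<lambda>x::real. - x)) (\<lambda>_. 1)"
    using lborel_real_affine[of "-1" 0] by simp
  then have "distr lborel borel (\<lambda>x::real. - x) = lborel"
    by (metis density_1)
  then have neg: "distr lborel lborel (\<lambda>x::real. - x) = lborel"
    by (subst distr_cong[of _ _ _ borel]) auto
  have "distr (density lborel (\<lambda>x. ennreal (std_normal_density (- x)))) lborel (\<lambda>x::real. - x)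
      = density lborel (\<lambda>x. ennreal (std_normal_density x))"
    using density_distr[of "\<lambda>x. ennreal (std_normal_density x)" lborel "\<lambda>x::real. - x" lborel] neg by simp
  moreover have "(\<lambda>x. ennreal (std_normal_density (- x))) = (\<lambda>x. ennreal (std_normal_density x))"
    by (simp add: std_normal_density_def)
  ultimately show ?thesis unfolding stdN_def \<sigma>
    by (subst distr_cong[of _ _ _ lborel]) auto
qed

lemma distr_stdN_PiM_empty:
  "distr (stdN_PiM I) (stdN_PiM {}) (\<lambda>x. \<lambda>_. undefined) = stdN_PiM {}"
proof -
  interpret P: prob_space "stdN_PiM I" by (rule prob_space_stdN_PiM)
  show ?thesis
    by (rule measure_eqI) (auto simp: emeasure_distr PiM_empty P.emeasure_space_1 subset_singleton_iff)
qed

lemma measurable_pair_fun_upd_PiM: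
  "(\<lambda>(a, X). X(i := a)) \<in> measurable (M i \<Otimes>\<^sub>M PiM I M) (PiM (insert i I) M)"
proof -
  have "(\<lambda>z. (\<lambda>(X, a). X(i := a)) (snd z, fst z)) \<in> measurable (M i \<Otimes>\<^sub>M PiM I M) (PiM (insert i I) M)"
    by (rule measurable_compose[OF _ measurable_add_dim]) measurable
  then show ?thesis
    by (simp add: case_prod_beta')
qed

lemma distr_stdN_PiM_extend:
  fixes f :: "'j \<Rightarrow> 'i \<Rightarrow> real"
  assumes finI: "finite I" and i0: "i0 \<notin> I" and k0: "k0 \<notin> J" and \<sigma>: "\<sigma> = 1 \<or> \<sigma> = -1"
    and IH: "distr (stdN_PiM I) (stdN_PiM J) (\<lambda>y. \<lambda>k\<in>J. \<Sum>i\<in>I. f k i * y i) = stdN_PiM J"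
  shows "distr (stdN_PiM (insert i0 I)) (stdN_PiM (insert k0 J))
      (\<lambda>y. \<lambda>k\<in>insert k0 J. if k = k0 then \<sigma> * y i0 else \<Sum>i\<in>I. f k i * y i) = stdN_PiM (insert k0 J)"
    (is "distr _ _ ?T = _")
proof -
  define L where "L y = (\<lambda>k\<in>J. \<Sum>i\<in>I. f k i * y i)" for y :: "'i \<Rightarrow> real"
  define upd where "upd = (\<lambda>(a::real, X::'i \<Rightarrow> real). X(i0 := a))"
  define upd' where "upd' = (\<lambda>(b::real, Z::'j \<Rightarrow> real). Z(k0 := b))"
  define S where "S = (\<lambda>(a::real, X::'i \<Rightarrow> real). (\<sigma> * a, L X))"
  have mL: "L \<in> measurable (stdN_PiM I) (stdN_PiM J)"
    unfolding L_def by (rule measurable_restrict) measurable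
  have mT: "?T \<in> measurable (stdN_PiM (insert i0 I)) (stdN_PiM (insert k0 J))"
    by (rule measurable_restrict) (use i0 in measurable)
  have mupd: "upd \<in> measurable (stdN \<Otimes>\<^sub>M stdN_PiM I) (stdN_PiM (insert i0 I))"
    unfolding upd_def by (rule measurable_pair_fun_upd_PiM)
  have mupd': "upd' \<in> measurable (stdN \<Otimes>\<^sub>M stdN_PiM J) (stdN_PiM (insert k0 J))"
    unfolding upd'_def by (rule measurable_pair_fun_upd_PiM)
  have mS: "S \<in> measurable (stdN \<Otimes>\<^sub>M stdN_PiM I) (stdN \<Otimes>\<^sub>M stdN_PiM J)"
    unfolding S_def using mL by measurable
  have TS: "?T (upd z) = upd' (S z)" for z
  proof -
    obtain a X where z: "z = (a, X)" by (metis prod.collapse)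
    have "(\<Sum>i\<in>I. f k i * (X(i0 := a)) i) = (\<Sum>i\<in>I. f k i * X i)" for k
      using i0 by (intro sum.cong) auto
    then show ?thesis unfolding z
      using k0 by (auto simp: upd_def upd'_def S_def L_def intro!: ext)
  qed
  have "distr (stdN \<Otimes>\<^sub>M stdN_PiM I) (stdN \<Otimes>\<^sub>M stdN_PiM J) S = stdN \<Otimes>\<^sub>M stdN_PiM J"
  proof -
    have "distr stdN stdN (\<lambda>a. \<sigma> * a) \<Otimes>\<^sub>M distr (stdN_PiM I) (stdN_PiM J) L
        = distr (stdN \<Otimes>\<^sub>M stdN_PiM I) (stdN \<Otimes>\<^sub>M stdN_PiM J) (\<lambda>(x, y). (\<sigma> * x, L y))"
      using mL IH[folded L_def]
      by (intro pair_measure_distr) (auto intro: prob_space_imp_sigma_finite prob_space_stdN_PiM)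
    then show ?thesis
      using stdN_sign_invariant[OF \<sigma>] IH[folded L_def] by (simp add: S_def)
  qed
  moreover have "distr (stdN \<Otimes>\<^sub>M stdN_PiM I) (stdN_PiM (insert i0 I)) upd = stdN_PiM (insert i0 I)"
    and "distr (stdN \<Otimes>\<^sub>M stdN_PiM J) (stdN_PiM (insert k0 J)) upd' = stdN_PiM (insert k0 J)"
    unfolding upd_def upd'_def by (rule distr_pair_PiM_eq_PiM; auto intro: prob_space_stdN)+
  moreover have "distr (stdN \<Otimes>\<^sub>M stdN_PiM I) (stdN_PiM (insert k0 J)) (?T \<circ> upd)
      = distr (stdN \<Otimes>\<^sub>M stdN_PiM I) (stdN_PiM (insert k0 J)) (upd' \<circ> S)"
    by (rule distr_cong) (auto simp: TS)
  ultimately show ?thesis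
    using mT mupd mupd' mS by (simp add: distr_distr[symmetric])
qed

lemma distr_stdN_PiM_orthonormal_rows:
  fixes e :: "'j \<Rightarrow> 'i \<Rightarrow> real"
  assumes "finite J" and "finite I"
    and "\<forall>k\<in>J. \<forall>k'\<in>J. (\<Sum>i\<in>I. e k i * e k' i) = (if k = k' then 1 else 0)"
  shows "distr (stdN_PiM I) (stdN_PiM J) (\<lambda>x. \<lambda>k\<in>J. \<Sum>i\<in>I. e k i * x i) = stdN_PiM J"
  using assms
proof (induction J arbitrary: I e rule: finite_induct)
  case empty
  have "(\<lambda>x. \<lambda>k\<in>{}. \<Sum>i\<in>I. e k i * x i) = (\<lambda>x. \<lambda>_. undefined)"
    by (simp add: fun_eq_iff)
  then show ?case
    using distr_stdN_PiM_empty by simp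
next
  case (insert k0 J)
  note finI = insert.prems(1) and orth = insert.prems(2)
  have "(\<Sum>i\<in>I. e k0 i * e k0 i) = 1"
    using orth by simp
  then obtain i0 where i0: "i0 \<in> I"
    by (metis ex_in_conv sum.empty zero_neq_one)
  \<comment> \<open>rotate so that the new row becomes \<open>\<pm>\<close> the i0-th coordinate vector\<close>
  obtain q \<sigma> where q: "stdN_invariant_orthogonal I q" and \<sigma>: "\<sigma> = 1 \<or> \<sigma> = -1"
    and row: "\<forall>l\<in>I. q i0 l = \<sigma> * e k0 l"
    using stdN_invariant_orthogonal_row[OF finI i0 \<open>(\<Sum>i\<in>I. e k0 i * e k0 i) = 1\<close>] by blast
  have oq: "\<And>l l'. l \<in> I \<Longrightarrow> l' \<in> I \<Longrightarrow> (\<Sum>i\<in>I. q i l * q i l') = (if l = l' then 1 else 0)"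
    using q by (simp add: stdN_invariant_orthogonal_def)
  define I' where "I' = I - {i0}"
  have I: "I = insert i0 I'" "i0 \<notin> I'" "finite I'"
    using i0 finI by (auto simp: I'_def)
  define f where "f k i = (\<Sum>l\<in>I. q i l * e k l)" for k i
  have f_i0: "f k i0 = 0" if "k \<in> J" for k
  proof -
    have "f k i0 = \<sigma> * (\<Sum>l\<in>I. e k0 l * e k l)"
      unfolding f_def using row by (simp add: sum_distrib_left mult.assoc)
    then show ?thesis
      using orth that insert.hyps(2) by auto
  qed
  have f_apply: "(\<Sum>i\<in>I'. f k i * (\<Sum>l\<in>I. q i l * x l)) = (\<Sum>l\<in>I. e k l * x l)" if "k \<in> J" for k x
  proof -
    have "(\<Sum>i\<in>I'. f k i * (\<Sum>l\<in>I. q i l * x l)) = (\<Sum>i\<in>I. f k i * (\<Sum>l\<in>I. q i l * x l))"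
      using I f_i0[OF that] by simp
    also have "\<dots> = (\<Sum>l\<in>I. e k l * x l)"
      unfolding f_def by (rule sum_orthonormal_cols_inner[OF oq finI])
    finally show ?thesis .
  qed
  have "\<forall>k\<in>J. \<forall>k'\<in>J. (\<Sum>i\<in>I'. f k i * f k' i) = (if k = k' then 1 else 0)"
  proof (intro ballI)
    fix k k' assume k: "k \<in> J" and k': "k' \<in> J"
    have "(\<Sum>i\<in>I'. f k i * f k' i) = (\<Sum>i\<in>I. f k i * f k' i)"
      using I f_i0[OF k] by simp
    also have "\<dots> = (\<Sum>l\<in>I. e k l * e k' l)"
      unfolding f_def by (rule sum_orthonormal_cols_inner[OF oq finI])
    finally show "(\<Sum>i\<in>I'. f k i * f k' i) = (if k = k' then 1 else 0)"
      using orth k k' by simp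
  qed
  then have IH: "distr (stdN_PiM I') (stdN_PiM J) (\<lambda>y. \<lambda>k\<in>J. \<Sum>i\<in>I'. f k i * y i) = stdN_PiM J"
    using insert.IH I(3) by blast
  let ?T = "\<lambda>y. \<lambda>k\<in>insert k0 J. if k = k0 then \<sigma> * y i0 else \<Sum>i\<in>I'. f k i * y i"
  have T: "distr (stdN_PiM I) (stdN_PiM (insert k0 J)) ?T = stdN_PiM (insert k0 J)"
    using distr_stdN_PiM_extend[OF I(3,2) insert.hyps(2) \<sigma> IH] I(1) by simp
  have "(\<lambda>x. \<lambda>k\<in>insert k0 J. \<Sum>i\<in>I. e k i * x i) = ?T \<circ> mat_vec I q"
  proof (intro ext)
    fix x k
    have "\<sigma> * (\<Sum>l\<in>I. q i0 l * x l) = (\<Sum>l\<in>I. e k0 l * x l)"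
      using row \<sigma> by (auto simp: sum_distrib_left)
    then show "(\<lambda>k\<in>insert k0 J. \<Sum>i\<in>I. e k i * x i) k = (?T \<circ> mat_vec I q) x k"
      using i0 I f_apply[of k x] by (auto simp: mat_vec_def)
  qed
  moreover have "?T \<in> measurable (stdN_PiM I) (stdN_PiM (insert k0 J))"
  proof (rule measurable_restrict)
    fix k
    have "(\<lambda>y. \<sigma> * y i0) \<in> measurable (stdN_PiM I) stdN" "(\<lambda>y. \<Sum>i\<in>I'. f k i * y i) \<in> measurable (stdN_PiM I) stdN"
      using i0 by (measurable; auto simp: I'_def)+
    then show "(\<lambda>y. if k = k0 then \<sigma> * y i0 else \<Sum>i\<in>I'. f k i * y i) \<in> measurable (stdN_PiM I) stdN"
      by simp
  qed
  moreover have "distr (stdN_PiM I) (stdN_PiM I) (mat_vec I q) = stdN_PiM I"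
    using q by (simp add: stdN_invariant_orthogonal_def)
  ultimately have "distr (stdN_PiM I) (stdN_PiM (insert k0 J)) (\<lambda>x. \<lambda>k\<in>insert k0 J. \<Sum>i\<in>I. e k i * x i)
      = distr (stdN_PiM I) (stdN_PiM (insert k0 J)) ?T"
    using finI by (simp add: distr_distr[symmetric])
  then show ?case
    using T by (simp only:)
qed

section \<open>Chi-squared distributions\<close>

lemma chi2_density_nonneg: "0 \<le> chi2_density d t"
  by (cases "d = 0") (auto simp: chi2_density_def intro!: divide_nonneg_nonneg mult_nonneg_nonneg Gamma_real_pos)

lemma borel_measurable_chi2_density[measurable]: "chi2_density d \<in> borel_measurable borel"
  unfolding chi2_density_def by measurable

lemma nn_integral_chi2_density:
  assumes d: "d \<ge> 1"
  shows "(\<integral>\<^sup>+x. ennreal (chi2_density d x) \<partial>lborel) = 1"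
proof -
  define a where "a = real d / 2"
  have a: "a > 0" using d by (simp add: a_def)
  have G: "Gamma a > 0" using a by (simp add: Gamma_real_pos)
  have "(\<integral>\<^sup>+x. ennreal (chi2_density d x) \<partial>lborel) = ennreal \<bar>2\<bar> * (\<integral>\<^sup>+x. ennreal (chi2_density d (0 + 2 * x)) \<partial>lborel)"
    by (rule nn_integral_real_affine) auto
  also have "\<dots> = (\<integral>\<^sup>+x. ennreal (2 * chi2_density d (2 * x)) \<partial>lborel)"
    by (subst nn_integral_cmult[symmetric]) (auto intro!: nn_integral_cong simp: ennreal_mult chi2_density_nonneg)
  also have "\<dots> = (\<integral>\<^sup>+x. ennreal (1 / Gamma a) * ennreal (indicator {0..} x * x powr (a - 1) / exp x) \<partial>lborel)"
  proof (rule nn_integral_cong)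
    fix x :: real
    show "ennreal (2 * chi2_density d (2 * x)) = ennreal (1 / Gamma a) * ennreal (indicator {0..} x * x powr (a - 1) / exp x)"
    proof (cases "x > 0")
      case True
      have "2 * chi2_density d (2 * x) = 2 * ((2 * x) powr (a - 1) * exp (- x) / (2 powr a * Gamma a))"
        using True by (simp add: chi2_density_def a_def)
      also have "(2 * x) powr (a - 1) = 2 powr (a - 1) * x powr (a - 1)"
        using True by (simp add: powr_mult)
      also have "2 powr a = 2 * 2 powr (a - 1)"
        by (simp add: powr_diff)
      finally have "2 * chi2_density d (2 * x) = x powr (a - 1) / exp x / Gamma a"
        using G by (simp add: exp_minus field_simps)
      then show ?thesis using True G by (simp add: ennreal_mult[symmetric] divide_nonneg_nonneg)
    next
      case False
      then have "x \<le> 0" by simp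
      then show ?thesis by (cases "x = 0") (simp_all add: chi2_density_def indicator_def)
    qed
  qed
  also have "\<dots> = ennreal (1 / Gamma a) * (\<integral>\<^sup>+x. ennreal (indicator {0..} x * x powr (a - 1) / exp x) \<partial>lborel)"
    by (rule nn_integral_cmult) measurable
  also have "(\<integral>\<^sup>+x. ennreal (indicator {0..} x * x powr (a - 1) / exp x) \<partial>lborel) = Gamma a"
    using Gamma_conv_nn_integral_real[OF a] by simp
  also have "ennreal (1 / Gamma a) * ennreal (Gamma a) = 1"
    using G by (simp add: ennreal_mult[symmetric])
  finally show ?thesis .
qed

lemma prob_space_chi2_density: "d \<ge> 1 \<Longrightarrow> prob_space (density lborel (\<lambda>x. ennreal (chi2_density d x)))"
  by (rule prob_spaceI) (simp add: emeasure_density nn_integral_chi2_density)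

lemma chi2_density_convolution_kernel:
  fixes x u :: real
  assumes x: "x > 0" and d: "d \<ge> 1"
  shows "x * (chi2_density 1 (x - x * u) * chi2_density d (x * u)) =
     (Gamma ((real d + 1) / 2) / (Gamma (1/2) * Gamma (real d / 2))) *
     (if 0 < u \<and> u < 1 then (1 - u) powr (-1/2) * u powr (real d / 2 - 1) else 0) * chi2_density (d + 1) x"
proof (cases "0 < u \<and> u < 1")
  case False
  then have "u \<le> 0 \<or> u \<ge> 1" by auto
  then have "chi2_density 1 (x - x * u) = 0 \<or> chi2_density d (x * u) = 0"
  proof
    assume "u \<le> 0" then have "x * u \<le> 0" using x by (simp add: mult_nonneg_nonpos)
    then show ?thesis by (simp add: chi2_density_def)
  next
    assume "u \<ge> 1" then have "x - x * u \<le> 0" using x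
      using mult_left_mono[of 1 u x] by simp
    then show ?thesis by (simp add: chi2_density_def)
  qed
  then show ?thesis using False by auto
next
  case True
  then have u0: "0 < u" and u1: "u < 1" by auto
  define h where "h = real d / 2"
  have h: "h > 0" using d by (simp add: h_def)
  have G1: "Gamma (1/2::real) > 0" by (simp add: Gamma_real_pos)
  have G2: "Gamma h > 0" using h by (simp add: Gamma_real_pos)
  have G3: "Gamma (h + 1/2) > 0" using h by (intro Gamma_real_pos) simp
  have xu: "x * u > 0" "x - x * u > 0" using x u0 u1 by (auto simp: algebra_simps)
  have A1: "(x - x * u) powr (-1/2) = x powr (-1/2) * (1 - u) powr (-1/2)"
  proof -
    have "x - x * u = x * (1 - u)" by (simp add: algebra_simps)
    then show ?thesis using x u1 by (simp add: powr_mult)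
  qed
  have A2: "(x * u) powr (h - 1) = x powr (h - 1) * u powr (h - 1)"
    using x u0 by (simp add: powr_mult)
  have E: "exp (- (x - x * u) / 2) * exp (- (x * u) / 2) = exp (- x / 2)"
    by (simp add: exp_add[symmetric] field_simps)
  have X: "x * (x powr (-1/2) * x powr (h - 1)) = x powr (h + 1/2 - 1)"
  proof -
    have e0: "h + 1/2 - 1 = 1 + (-1/2) + (h - 1)" by simp
    have e1: "x powr 1 = x" using x by simp
    have "x powr (1 + (-1/2) + (h - 1)) = x powr 1 * x powr (-1/2) * x powr (h - 1)"
      by (simp only: powr_add)
    then show ?thesis unfolding e0 e1 by (simp only: mult.assoc)
  qed
  have T: "2 powr (1/2) * 2 powr h = (2::real) powr (h + 1/2)"
    by (simp add: powr_add[symmetric] add.commute)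
  have c1: "chi2_density 1 (x - x * u) = (x - x * u) powr (-1/2) * exp (- (x - x * u) / 2) / (2 powr (1/2) * Gamma (1/2))"
    using xu by (simp add: chi2_density_def)
  have cd: "chi2_density d (x * u) = (x * u) powr (h - 1) * exp (- (x * u) / 2) / (2 powr h * Gamma h)"
    using xu by (simp add: chi2_density_def h_def)
  have cd1: "chi2_density (d + 1) x = x powr (h + 1/2 - 1) * exp (- x / 2) / (2 powr (h + 1/2) * Gamma (h + 1/2))"
    using x by (simp add: chi2_density_def h_def add_divide_distrib ac_simps)
  have "x * (chi2_density 1 (x - x * u) * chi2_density d (x * u))
      = (x * (x powr (-1/2) * x powr (h - 1))) * ((1 - u) powr (-1/2) * u powr (h - 1))
        * (exp (- (x - x * u) / 2) * exp (- (x * u) / 2)) / ((2 powr (1/2) * 2 powr h) * (Gamma (1/2) * Gamma h))"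
    unfolding c1 cd A1 A2 by (simp add: field_simps)
  also have "\<dots> = x powr (h + 1/2 - 1) * ((1 - u) powr (-1/2) * u powr (h - 1)) * exp (- x / 2)
        / (2 powr (h + 1/2) * (Gamma (1/2) * Gamma h))"
    unfolding X E T ..
  also have "\<dots> = (Gamma (h + 1/2) / (Gamma (1/2) * Gamma h)) * ((1 - u) powr (-1/2) * u powr (h - 1))
        * (x powr (h + 1/2 - 1) * exp (- x / 2) / (2 powr (h + 1/2) * Gamma (h + 1/2)))"
    using G3 by (simp add: field_simps)
  finally show ?thesis using True unfolding cd1 by (simp add: h_def add_divide_distrib)
qed

lemma convolution_chi2_density:
  assumes d: "d \<ge> 1"
  shows "(\<lambda>x. \<integral>\<^sup>+y. ennreal (chi2_density 1 (x - y)) * ennreal (chi2_density d y) \<partial>lborel)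
       = (\<lambda>x. ennreal (chi2_density (d + 1) x))" (is "?conv = ?chi")
proof -
  define C where "C = Gamma ((real d + 1) / 2) / (Gamma (1/2) * Gamma (real d / 2))"
  define Gf where "Gf u = (if 0 < u \<and> u < 1 then (1 - u) powr (-1/2) * u powr (real d / 2 - 1) else 0)" for u :: real
  define I where "I = (\<integral>\<^sup>+u. ennreal (Gf u) \<partial>lborel)"
  have C0: "C \<ge> 0" unfolding C_def using d
    by (intro divide_nonneg_nonneg mult_nonneg_nonneg less_imp_le[OF Gamma_real_pos]) auto
  have Gf0: "Gf u \<ge> 0" for u by (simp add: Gf_def)
  have mGf: "Gf \<in> borel_measurable borel" unfolding Gf_def by measurable
  \<comment> \<open>substituting \<open>y = x u\<close> factors the integral; the constant \<open>C I\<close> is then forced to be 1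
     because both sides integrate to 1\<close>
  have eq: "?conv x = ennreal C * I * ennreal (chi2_density (d + 1) x)" for x
  proof (cases "x > 0")
    case False
    have z: "ennreal (chi2_density 1 (x - y)) * ennreal (chi2_density d y) = 0" for y
      using False by (cases "y > 0") (auto simp: chi2_density_def)
    have zz: "(\<lambda>y. ennreal (chi2_density 1 (x - y)) * ennreal (chi2_density d y)) = (\<lambda>y. 0)"
      by (rule ext) (rule z)
    have "?conv x = 0" by (subst zz) simp
    then show ?thesis using False by (simp add: chi2_density_def)
  next
    case True
    have "?conv x = (\<integral>\<^sup>+y. ennreal (chi2_density 1 (x - y) * chi2_density d y) \<partial>lborel)"
      by (simp add: ennreal_mult chi2_density_nonneg)
    also have "\<dots> = ennreal \<bar>x\<bar> * (\<integral>\<^sup>+u. ennreal (chi2_density 1 (x - (0 + x * u)) * chi2_density d (0 + x * u)) \<partial>lborel)"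
      using True by (intro nn_integral_real_affine) auto
    also have "\<dots> = (\<integral>\<^sup>+u. ennreal (x * (chi2_density 1 (x - x * u) * chi2_density d (x * u))) \<partial>lborel)"
      using True by (subst nn_integral_cmult[symmetric]) (auto intro!: nn_integral_cong simp: ennreal_mult[symmetric] chi2_density_nonneg)
    also have "\<dots> = (\<integral>\<^sup>+u. ennreal (C * chi2_density (d + 1) x) * ennreal (Gf u) \<partial>lborel)"
    proof (rule nn_integral_cong)
      fix u :: real
      have p: "x * (chi2_density 1 (x - x * u) * chi2_density d (x * u)) = C * Gf u * chi2_density (d + 1) x"
        unfolding C_def Gf_def by (rule chi2_density_convolution_kernel[OF True d])
      have "ennreal (C * chi2_density (d + 1) x) * ennreal (Gf u) = ennreal (C * chi2_density (d + 1) x * Gf u)"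
        using C0 Gf0 chi2_density_nonneg by (simp add: ennreal_mult)
      then show "ennreal (x * (chi2_density 1 (x - x * u) * chi2_density d (x * u))) = ennreal (C * chi2_density (d + 1) x) * ennreal (Gf u)"
        unfolding p by (simp add: mult_ac)
    qed
    also have "\<dots> = ennreal (C * chi2_density (d + 1) x) * I"
      unfolding I_def using mGf by (intro nn_integral_cmult) measurable
    finally show ?thesis using C0 chi2_density_nonneg by (simp add: ennreal_mult mult_ac)
  qed
  have eqf: "?conv = (\<lambda>x. ennreal C * I * ennreal (chi2_density (d + 1) x))"
    by (rule ext) (rule eq)
  have "prob_space (density lborel ?conv)"
    using d by (intro prob_space_convolution_density prob_space_chi2_density) auto
  then have "prob_space (density lborel (\<lambda>x. ennreal C * I * ennreal (chi2_density (d + 1) x)))"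
    unfolding eqf .
  from prob_space.emeasure_space_1[OF this]
  have "1 = emeasure (density lborel (\<lambda>x. ennreal C * I * ennreal (chi2_density (d + 1) x))) UNIV"
    by simp
  also have "\<dots> = (\<integral>\<^sup>+x. ennreal C * I * ennreal (chi2_density (d + 1) x) \<partial>lborel)"
    by (subst emeasure_density) auto
  also have "\<dots> = ennreal C * I * (\<integral>\<^sup>+x. ennreal (chi2_density (d + 1) x) \<partial>lborel)"
    by (rule nn_integral_cmult) measurable
  also have "(\<integral>\<^sup>+x. ennreal (chi2_density (d + 1) x) \<partial>lborel) = 1"
    using d by (intro nn_integral_chi2_density) simp
  finally have CI: "ennreal C * I = 1" by simp
  show ?thesis using eq CI by (simp add: fun_eq_iff)
qed

lemma chi2_density_one_square:
  assumes u: "u > 0"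
  shows "chi2_density 1 (u\<^sup>2) * (2 * u) = 2 * std_normal_density u"
proof -
  have "(u\<^sup>2) powr (1/2 - 1) = 1 / u"
  proof -
    have "(u\<^sup>2) powr (1/2 - 1) = (u\<^sup>2) powr (- (1/2))" by simp
    also have "\<dots> = 1 / (u\<^sup>2) powr (1/2)" by (rule powr_minus_divide)
    also have "(u\<^sup>2) powr (1/2) = sqrt (u\<^sup>2)" by (rule powr_half_sqrt) simp
    also have "sqrt (u\<^sup>2) = u" using u by simp
    finally show ?thesis .
  qed
  moreover have "2 powr (1/2) * Gamma (1/2) = sqrt (2 * pi)"
    by (simp add: Gamma_one_half_real powr_half_sqrt real_sqrt_mult)
  ultimately show ?thesis using u
    by (simp add: chi2_density_def std_normal_density_def field_simps)
qed

lemma emeasure_stdN_symmetric_interval: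
  "emeasure stdN {-r..r} = (\<integral>\<^sup>+a. ennreal (2 * std_normal_density a * indicator {0..r} a) \<partial>lborel)"
proof -
  have "emeasure stdN {-r..r} = (\<integral>\<^sup>+a. ennreal (std_normal_density a) * indicator {-r..r} a \<partial>lborel)"
    unfolding stdN_def by (rule emeasure_density) auto
  also have "\<dots> = (\<integral>\<^sup>+a. ennreal (std_normal_density a) * indicator {-r..<0} a + ennreal (std_normal_density a) * indicator {0..r} a \<partial>lborel)"
    by (rule nn_integral_cong) (auto simp: indicator_def)
  also have "\<dots> = (\<integral>\<^sup>+a. ennreal (std_normal_density a) * indicator {-r..<0} a \<partial>lborel) + (\<integral>\<^sup>+a. ennreal (std_normal_density a) * indicator {0..r} a \<partial>lborel)"
    by (rule nn_integral_add) auto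
  also have "(\<integral>\<^sup>+a. ennreal (std_normal_density a) * indicator {-r..<0} a \<partial>lborel) = (\<integral>\<^sup>+a. ennreal (std_normal_density a) * indicator {0..r} a \<partial>lborel)"
  proof -
    have "(\<integral>\<^sup>+a. ennreal (std_normal_density a) * indicator {-r..<0} a \<partial>lborel)
        = ennreal \<bar>-1\<bar> * (\<integral>\<^sup>+a. ennreal (std_normal_density (0 + -1 * a)) * indicator {-r..<0} (0 + -1 * a) \<partial>lborel)"
      by (rule nn_integral_real_affine) auto
    also have "\<dots> = (\<integral>\<^sup>+a. ennreal (std_normal_density a) * indicator {0<..r} a \<partial>lborel)"
      by (auto intro!: nn_integral_cong simp: std_normal_density_def indicator_def)
    also have "\<dots> = (\<integral>\<^sup>+a. ennreal (std_normal_density a) * indicator {0..r} a \<partial>lborel)"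
      by (intro nn_integral_cong_AE eventually_mono[OF AE_lborel_singleton[of 0]]) (auto simp: indicator_def)
    finally show ?thesis .
  qed
  also have "(\<integral>\<^sup>+a. ennreal (std_normal_density a) * indicator {0..r} a \<partial>lborel) + (\<integral>\<^sup>+a. ennreal (std_normal_density a) * indicator {0..r} a \<partial>lborel)
     = (\<integral>\<^sup>+a. ennreal (2 * std_normal_density a * indicator {0..r} a) \<partial>lborel)"
    by (subst nn_integral_add[symmetric]) (auto intro!: nn_integral_cong simp: indicator_def ennreal_plus[symmetric] simp del: ennreal_plus)
  finally show ?thesis .
qed

lemma emeasure_chi2_one_atMost_square:
  assumes r: "r \<ge> 0"
  shows "emeasure (density lborel (\<lambda>t. ennreal (chi2_density 1 t))) {..r\<^sup>2}
    = (\<integral>\<^sup>+a. ennreal (2 * std_normal_density a * indicator {0..r} a) \<partial>lborel)"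
proof -
  have "emeasure (density lborel (\<lambda>t. ennreal (chi2_density 1 t))) {..r\<^sup>2} = (\<integral>\<^sup>+t. ennreal (chi2_density 1 t) * indicator {..r\<^sup>2} t \<partial>lborel)"
    by (rule emeasure_density) auto
  also have "\<dots> = (\<integral>\<^sup>+t. ennreal (chi2_density 1 t * indicator {0\<^sup>2..r\<^sup>2} t) \<partial>lborel)"
    using r by (intro nn_integral_cong) (auto simp: indicator_def chi2_density_def)
  also have "\<dots> = (\<integral>\<^sup>+u. ennreal (chi2_density 1 (u\<^sup>2) * (2 * u) * indicator {0..r} u) \<partial>lborel)"
  proof (rule nn_integral_substitution[where g="\<lambda>u. u\<^sup>2" and g'="\<lambda>u. 2 * u"])
    show "set_borel_measurable borel {0\<^sup>2..r\<^sup>2} (chi2_density 1)"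
      unfolding set_borel_measurable_def by measurable
    show "((\<lambda>u. u\<^sup>2) has_real_derivative 2 * u) (at u)" for u :: real
      by (auto intro!: derivative_eq_intros)
    show "continuous_on {0..r} (\<lambda>u::real. 2 * u)" by (intro continuous_intros)
  qed (use r in auto)
  also have "\<dots> = (\<integral>\<^sup>+a. ennreal (2 * std_normal_density a * indicator {0..r} a) \<partial>lborel)"
  proof (intro nn_integral_cong_AE eventually_mono[OF AE_lborel_singleton[of 0]] impI)
    fix u :: real assume "u \<noteq> 0"
    show "ennreal (chi2_density 1 (u\<^sup>2) * (2 * u) * indicator {0..r} u) = ennreal (2 * std_normal_density u * indicator {0..r} u)"
    proof (cases "u > 0")
      case True then show ?thesis by (subst chi2_density_one_square[OF True]) (rule refl)
    next
      case False then show ?thesis using \<open>u \<noteq> 0\<close> by (simp add: indicator_def)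
    qed
  qed
  finally show ?thesis .
qed

lemma emeasure_distr_square_stdN_atMost:
  assumes x: "x \<ge> 0"
  shows "emeasure (distr stdN borel (\<lambda>a. a\<^sup>2)) {..x} = emeasure (density lborel (\<lambda>t. ennreal (chi2_density 1 t))) {..x}"
proof -
  define r where "r = sqrt x"
  have r: "r \<ge> 0" "r\<^sup>2 = x" using x by (auto simp: r_def)
  have "emeasure (distr stdN borel (\<lambda>a. a\<^sup>2)) {..x} = emeasure stdN ((\<lambda>a. a\<^sup>2) -` {..x} \<inter> space stdN)"
    by (rule emeasure_distr) auto
  also have "(\<lambda>a. a\<^sup>2) -` {..x} \<inter> space stdN = {-r..r}"
    using r by (auto simp: abs_le_square_iff[symmetric] real_sqrt_le_iff simp del: abs_le_square_iff)
  finally show ?thesis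
    using emeasure_stdN_symmetric_interval emeasure_chi2_one_atMost_square[OF r(1)] r(2) by simp
qed

lemma distr_square_stdN: "distr stdN borel (\<lambda>a. a\<^sup>2) = density lborel (\<lambda>t. ennreal (chi2_density 1 t))"
proof (rule cdf_unique)
  interpret N: prob_space stdN by (rule prob_space_stdN)
  show "real_distribution (distr stdN borel (\<lambda>a. a\<^sup>2))" by simp
  interpret C: prob_space "density lborel (\<lambda>t. ennreal (chi2_density 1 t))"
    by (rule prob_space_chi2_density) simp
  show "real_distribution (density lborel (\<lambda>t. ennreal (chi2_density 1 t)))"
    by (unfold_locales) simp
  show "cdf (distr stdN borel (\<lambda>a. a\<^sup>2)) = cdf (density lborel (\<lambda>t. ennreal (chi2_density 1 t)))"
  proof (rule ext)
    fix x :: real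
    show "cdf (distr stdN borel (\<lambda>a. a\<^sup>2)) x = cdf (density lborel (\<lambda>t. ennreal (chi2_density 1 t))) x"
    proof (cases "x \<ge> 0")
      case True
      then show ?thesis unfolding cdf_def measure_def using emeasure_distr_square_stdN_atMost[OF True] by simp
    next
      case False
      have "emeasure (distr stdN borel (\<lambda>a. a\<^sup>2)) {..x} = emeasure stdN ((\<lambda>a. a\<^sup>2) -` {..x} \<inter> space stdN)"
        by (rule emeasure_distr) auto
      also have "(\<lambda>a. a\<^sup>2) -` {..x} \<inter> space stdN = {}"
        using False by auto (smt (verit) zero_le_power2)
      finally have 1: "emeasure (distr stdN borel (\<lambda>a. a\<^sup>2)) {..x} = 0" by simp
      have "emeasure (density lborel (\<lambda>t. ennreal (chi2_density 1 t))) {..x} = (\<integral>\<^sup>+t. ennreal (chi2_density 1 t) * indicator {..x} t \<partial>lborel)"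
        by (rule emeasure_density) auto
      also have "(\<lambda>t. ennreal (chi2_density 1 t) * indicator {..x} t) = (\<lambda>t. 0)"
        using False by (intro ext) (auto simp: indicator_def chi2_density_def)
      finally have 2: "emeasure (density lborel (\<lambda>t. ennreal (chi2_density 1 t))) {..x} = 0" by simp
      show ?thesis unfolding cdf_def measure_def using 1 2 by simp
    qed
  qed
qed

lemma distributed_square_stdN: "distributed stdN lborel (\<lambda>a. a\<^sup>2) (\<lambda>t. ennreal (chi2_density 1 t))"
  unfolding distributed_def
proof (intro conjI)
  show "distr stdN lborel (\<lambda>a. a\<^sup>2) = density lborel (\<lambda>t. ennreal (chi2_density 1 t))"
    using distr_square_stdN by (subst distr_cong[of _ _ _ borel]) auto
qed auto

lemma distr_pair_snd_prob_space:
  assumes "prob_space M1" "sigma_finite_measure M2"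
  shows "distr (M1 \<Otimes>\<^sub>M M2) M2 snd = M2"
proof (intro measure_eqI)
  interpret M1: prob_space M1 by fact
  interpret M2: sigma_finite_measure M2 by fact
  fix A assume A: "A \<in> sets (distr (M1 \<Otimes>\<^sub>M M2) M2 snd)"
  from A have "emeasure (distr (M1 \<Otimes>\<^sub>M M2) M2 snd) A = emeasure (M1 \<Otimes>\<^sub>M M2) (space M1 \<times> A)"
    by (auto simp add: emeasure_distr space_pair_measure dest: sets.sets_into_space intro!: arg_cong2[where f=emeasure])
  with A show "emeasure (distr (M1 \<Otimes>\<^sub>M M2) M2 snd) A = emeasure M2 A"
    by (simp add: M2.emeasure_pair_measure_Times M1.emeasure_space_1)
qed simp

lemma distributed_pair_sum:
  fixes X :: "'a \<Rightarrow> real" and Y :: "'b \<Rightarrow> real"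
  assumes M1: "prob_space M1" and M2: "prob_space M2"
    and X: "distributed M1 lborel X f" and Y: "distributed M2 lborel Y g"
  shows "distributed (M1 \<Otimes>\<^sub>M M2) lborel (\<lambda>z. X (fst z) + Y (snd z)) (\<lambda>x. \<integral>\<^sup>+y. f (x - y) * g y \<partial>lborel)"
proof -
  interpret M1: prob_space M1 by fact
  interpret M2: prob_space M2 by fact
  interpret P: pair_prob_space M1 M2 ..
  have mX[measurable]: "X \<in> borel_measurable M1" using X by (simp add: distributed_def)
  have mY[measurable]: "Y \<in> borel_measurable M2" using Y by (simp add: distributed_def)
  have dX: "distr (M1 \<Otimes>\<^sub>M M2) borel (\<lambda>z. X (fst z)) = distr M1 borel X"
  proof -
    have "distr (M1 \<Otimes>\<^sub>M M2) borel (X \<circ> fst) = distr (distr (M1 \<Otimes>\<^sub>M M2) M1 fst) borel X"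
      by (rule distr_distr[symmetric]) auto
    then show ?thesis by (simp add: M2.distr_pair_fst comp_def)
  qed
  have dY: "distr (M1 \<Otimes>\<^sub>M M2) borel (\<lambda>z. Y (snd z)) = distr M2 borel Y"
  proof -
    have "distr (M1 \<Otimes>\<^sub>M M2) borel (Y \<circ> snd) = distr (distr (M1 \<Otimes>\<^sub>M M2) M2 snd) borel Y"
      by (rule distr_distr[symmetric]) auto
    then show ?thesis using distr_pair_snd_prob_space[OF M1 M2.sigma_finite_measure_axioms] by (simp add: comp_def)
  qed
  have ind: "P.indep_var borel (\<lambda>z. X (fst z)) borel (\<lambda>z. Y (snd z))"
    unfolding P.indep_var_distribution_eq
  proof (intro conjI)
    show "distr (M1 \<Otimes>\<^sub>M M2) borel (\<lambda>z. X (fst z)) \<Otimes>\<^sub>M distr (M1 \<Otimes>\<^sub>M M2) borel (\<lambda>z. Y (snd z)) =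
      distr (M1 \<Otimes>\<^sub>M M2) (borel \<Otimes>\<^sub>M borel) (\<lambda>z. (X (fst z), Y (snd z)))"
      unfolding dX dY
      by (subst pair_measure_distr) (auto intro!: prob_space_imp_sigma_finite M2.prob_space_distr simp: case_prod_beta')
  qed auto
  have dX': "distributed (M1 \<Otimes>\<^sub>M M2) lborel (\<lambda>z. X (fst z)) f"
    unfolding distributed_def
  proof (intro conjI)
    have "distr (M1 \<Otimes>\<^sub>M M2) lborel (\<lambda>z. X (fst z)) = distr M1 lborel X"
      using dX by (metis (no_types, lifting) distr_cong sets_lborel)
    then show "distr (M1 \<Otimes>\<^sub>M M2) lborel (\<lambda>z. X (fst z)) = density lborel f"
      using X by (simp add: distributed_def)
  qed (use X in \<open>auto simp: distributed_def\<close>)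
  have dY': "distributed (M1 \<Otimes>\<^sub>M M2) lborel (\<lambda>z. Y (snd z)) g"
    unfolding distributed_def
  proof (intro conjI)
    have "distr (M1 \<Otimes>\<^sub>M M2) lborel (\<lambda>z. Y (snd z)) = distr M2 lborel Y"
      using dY by (metis (no_types, lifting) distr_cong sets_lborel)
    then show "distr (M1 \<Otimes>\<^sub>M M2) lborel (\<lambda>z. Y (snd z)) = density lborel g"
      using Y by (simp add: distributed_def)
  qed (use Y in \<open>auto simp: distributed_def\<close>)
  show ?thesis using P.distributed_convolution[OF ind dX' dY'] .
qed

lemma distributed_sum_squares_stdN_PiM:
  assumes "finite J" "J \<noteq> {}"
  shows "distributed (stdN_PiM J) lborel (\<lambda>y. \<Sum>k\<in>J. (y k)\<^sup>2) (\<lambda>t. ennreal (chi2_density (card J) t))"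
  using assms
proof (induction J rule: finite_ne_induct)
  case (singleton k)
  interpret PS: product_prob_space "\<lambda>_::'a. stdN"
    by (simp add: product_prob_space_def product_sigma_finite_def prob_space_imp_sigma_finite prob_space_stdN product_prob_space_axioms_def)
  have D: "distr stdN (stdN_PiM {k}) (\<lambda>x. \<lambda>i\<in>{k}. x) = stdN_PiM {k}" by (rule PS.distr_component)
  have m1: "(\<lambda>x::real. \<lambda>i\<in>{k}. x) \<in> measurable stdN (stdN_PiM {k})" by measurable
  have m2: "(\<lambda>y. \<Sum>k\<in>{k}. (y k)\<^sup>2) \<in> measurable (stdN_PiM {k}) lborel" by measurable
  have "distr (stdN_PiM {k}) lborel (\<lambda>y. \<Sum>k\<in>{k}. (y k)\<^sup>2) = distr (distr stdN (stdN_PiM {k}) (\<lambda>x. \<lambda>i\<in>{k}. x)) lborel (\<lambda>y. \<Sum>k\<in>{k}. (y k)\<^sup>2)"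
    using D by simp
  also have "\<dots> = distr stdN lborel ((\<lambda>y. \<Sum>k\<in>{k}. (y k)\<^sup>2) \<circ> (\<lambda>x. \<lambda>i\<in>{k}. x))"
    using m2 m1 by (rule distr_distr)
  also have "((\<lambda>y. \<Sum>k\<in>{k}. (y k)\<^sup>2) \<circ> (\<lambda>x. \<lambda>i\<in>{k}. x)) = (\<lambda>a. a\<^sup>2)" by (auto simp: fun_eq_iff)
  also have "distr stdN lborel (\<lambda>a. a\<^sup>2) = density lborel (\<lambda>t. ennreal (chi2_density 1 t))"
    using distributed_square_stdN by (simp add: distributed_def)
  finally show ?case unfolding distributed_def using m2 by simp
next
  case (insert k J')
  define d where "d = card J'"
  have d: "d \<ge> 1" using insert by (simp add: d_def Suc_le_eq card_gt_0_iff)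
  have cardJ: "card (insert k J') = d + 1" using insert by (simp add: d_def)
  define upd where "upd = (\<lambda>(a::real, X::'a \<Rightarrow> real). X(k := a))"
  have D1: "distr (stdN \<Otimes>\<^sub>M stdN_PiM J') (stdN_PiM (insert k J')) upd = stdN_PiM (insert k J')"
    unfolding upd_def by (rule distr_pair_PiM_eq_PiM) (auto intro: prob_space_stdN)
  have mupd: "upd \<in> measurable (stdN \<Otimes>\<^sub>M stdN_PiM J') (stdN_PiM (insert k J'))"
  proof -
    have "(\<lambda>z. (\<lambda>(f, y). f(k := y)) (snd z, fst z)) \<in> measurable (stdN \<Otimes>\<^sub>M stdN_PiM J') (stdN_PiM (insert k J'))"
      by (rule measurable_compose[OF _ measurable_add_dim]) measurable
    then show ?thesis by (simp add: upd_def case_prod_beta')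
  qed
  have mS: "(\<lambda>y. \<Sum>k\<in>insert k J'. (y k)\<^sup>2) \<in> measurable (stdN_PiM (insert k J')) lborel" by measurable
  have comp: "((\<lambda>y. \<Sum>k\<in>insert k J'. (y k)\<^sup>2) \<circ> upd) z = (fst z)\<^sup>2 + (\<lambda>y. \<Sum>k\<in>J'. (y k)\<^sup>2) (snd z)" for z
  proof -
    obtain a X where z: "z = (a, X)" by (metis prod.collapse)
    have "(\<Sum>i\<in>J'. ((X(k := a)) i)\<^sup>2) = (\<Sum>i\<in>J'. (X i)\<^sup>2)"
      using insert.hyps by (intro sum.cong) auto
    then show ?thesis using insert.hyps by (simp add: z upd_def)
  qed
  have conv: "distributed (stdN \<Otimes>\<^sub>M stdN_PiM J') lborel (\<lambda>z. (fst z)\<^sup>2 + (\<lambda>y. \<Sum>k\<in>J'. (y k)\<^sup>2) (snd z))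
      (\<lambda>x. \<integral>\<^sup>+y. ennreal (chi2_density 1 (x - y)) * ennreal (chi2_density d y) \<partial>lborel)"
    by (rule distributed_pair_sum[OF prob_space_stdN prob_space_stdN_PiM distributed_square_stdN]) (use insert.IH in \<open>simp add: d_def\<close>)
  then have conv': "distributed (stdN \<Otimes>\<^sub>M stdN_PiM J') lborel (\<lambda>z. (fst z)\<^sup>2 + (\<lambda>y. \<Sum>k\<in>J'. (y k)\<^sup>2) (snd z))
      (\<lambda>x. ennreal (chi2_density (d + 1) x))"
    unfolding convolution_chi2_density[OF d] .
  have "distr (stdN_PiM (insert k J')) lborel (\<lambda>y. \<Sum>k\<in>insert k J'. (y k)\<^sup>2)
      = distr (distr (stdN \<Otimes>\<^sub>M stdN_PiM J') (stdN_PiM (insert k J')) upd) lborel (\<lambda>y. \<Sum>k\<in>insert k J'. (y k)\<^sup>2)"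
    using D1 by simp
  also have "\<dots> = distr (stdN \<Otimes>\<^sub>M stdN_PiM J') lborel ((\<lambda>y. \<Sum>k\<in>insert k J'. (y k)\<^sup>2) \<circ> upd)"
    using mS mupd by (rule distr_distr)
  also have "((\<lambda>y. \<Sum>k\<in>insert k J'. (y k)\<^sup>2) \<circ> upd) = (\<lambda>z. (fst z)\<^sup>2 + (\<lambda>y. \<Sum>k\<in>J'. (y k)\<^sup>2) (snd z))"
    using comp by (rule ext)
  also have "distr (stdN \<Otimes>\<^sub>M stdN_PiM J') lborel (\<lambda>z. (fst z)\<^sup>2 + (\<lambda>y. \<Sum>k\<in>J'. (y k)\<^sup>2) (snd z)) = density lborel (\<lambda>x. ennreal (chi2_density (d + 1) x))"
    using conv' by (simp add: distributed_def)
  finally show ?case unfolding distributed_def cardJ using mS by simp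
qed

lemma emeasure_chi2_greaterThan:
  assumes d: "d \<ge> 1"
  shows "emeasure (density lborel (\<lambda>x. ennreal (chi2_density d x))) {t<..} = ennreal (Qchi2 d t)"
proof -
  have int: "integrable lborel (\<lambda>x. indicator {t<..} x * chi2_density d x)"
  proof (rule integrableI_nonneg)
    show "AE x in lborel. 0 \<le> indicator {t<..} x * chi2_density d x"
      by (auto simp: chi2_density_nonneg)
    have "(\<integral>\<^sup>+x. ennreal (indicator {t<..} x * chi2_density d x) \<partial>lborel) \<le> (\<integral>\<^sup>+x. ennreal (chi2_density d x) \<partial>lborel)"
      by (intro nn_integral_mono) (auto simp: indicator_def chi2_density_nonneg)
    also have "\<dots> = 1" using nn_integral_chi2_density[OF d] .
    finally show "(\<integral>\<^sup>+x. ennreal (indicator {t<..} x * chi2_density d x) \<partial>lborel) < \<infinity>"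
      by (simp add: le_less_trans)
  qed measurable
  have "emeasure (density lborel (\<lambda>x. ennreal (chi2_density d x))) {t<..} = (\<integral>\<^sup>+x. ennreal (chi2_density d x) * indicator {t<..} x \<partial>lborel)"
    by (rule emeasure_density) auto
  also have "\<dots> = (\<integral>\<^sup>+x. ennreal (indicator {t<..} x * chi2_density d x) \<partial>lborel)"
    by (intro nn_integral_cong) (auto simp: indicator_def)
  also have "\<dots> = ennreal (\<integral>x. indicator {t<..} x * chi2_density d x \<partial>lborel)"
    using int by (intro nn_integral_eq_integral) (auto simp: chi2_density_nonneg)
  also have "(\<integral>x. indicator {t<..} x * chi2_density d x \<partial>lborel) = Qchi2 d t"
    unfolding Qchi2_def set_lebesgue_integral_def by simp
  finally show ?thesis .
qed

lemma Qchi2_nonneg: "Qchi2 d t \<ge> 0"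
  unfolding Qchi2_def set_lebesgue_integral_def
  by (intro integral_nonneg_AE) (auto simp: chi2_density_nonneg)

lemma measure_stdN_PiM_sum_squares_gt:
  assumes "finite J" "J \<noteq> {}"
  shows "measure (stdN_PiM J) {y \<in> space (stdN_PiM J). t < (\<Sum>k\<in>J. (y k)\<^sup>2)} = Qchi2 (card J) t"
proof -
  have D: "distributed (stdN_PiM J) lborel (\<lambda>y. \<Sum>k\<in>J. (y k)\<^sup>2) (\<lambda>t. ennreal (chi2_density (card J) t))"
    using distributed_sum_squares_stdN_PiM[OF assms] .
  have c: "card J \<ge> 1" using assms by (simp add: Suc_le_eq card_gt_0_iff)
  have m: "(\<lambda>y. \<Sum>k\<in>J. (y k)\<^sup>2) \<in> measurable (stdN_PiM J) lborel" by measurable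
  have "emeasure (stdN_PiM J) {y \<in> space (stdN_PiM J). t < (\<Sum>k\<in>J. (y k)\<^sup>2)} = emeasure (distr (stdN_PiM J) lborel (\<lambda>y. \<Sum>k\<in>J. (y k)\<^sup>2)) {t<..}"
    using m by (subst emeasure_distr) (auto intro!: arg_cong[where f="emeasure (stdN_PiM J)"])
  also have "\<dots> = emeasure (density lborel (\<lambda>t. ennreal (chi2_density (card J) t))) {t<..}"
    using D by (simp add: distributed_def)
  also have "\<dots> = ennreal (Qchi2 (card J) t)" by (rule emeasure_chi2_greaterThan[OF c])
  finally show ?thesis unfolding measure_def using Qchi2_nonneg by simp
qed

lemma measure_stdN_PiM_weighted_sum_squares_bounds:
  fixes c :: "'j \<Rightarrow> real"
  assumes fin: "finite J" and ne: "J \<noteq> {}" and a: "0 < a"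
    and c: "\<And>p. p \<in> J \<Longrightarrow> a \<le> c p \<and> c p \<le> b"
  shows "Qchi2 (card J) (\<gamma> / a) \<le> measure (stdN_PiM J) {y \<in> space (stdN_PiM J). \<gamma> < (\<Sum>p\<in>J. c p * (y p)\<^sup>2)}"
    and "measure (stdN_PiM J) {y \<in> space (stdN_PiM J). \<gamma> < (\<Sum>p\<in>J. c p * (y p)\<^sup>2)} \<le> Qchi2 (card J) (\<gamma> / b)"
proof -
  interpret P: prob_space "stdN_PiM J" by (rule prob_space_stdN_PiM)
  define S where "S = {y \<in> space (stdN_PiM J). \<gamma> < (\<Sum>p\<in>J. c p * (y p)\<^sup>2)}"
  define SS where "SS t = {y \<in> space (stdN_PiM J). t < (\<Sum>p\<in>J. (y p)\<^sup>2)}" for t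
  have b: "0 < b"
    using ne a c by (metis all_not_in_conv order.strict_trans2)
  have Q: "measure (stdN_PiM J) (SS t) = Qchi2 (card J) t" for t
    unfolding SS_def by (rule measure_stdN_PiM_sum_squares_gt[OF fin ne])
  have lower: "a * (\<Sum>p\<in>J. (y p)\<^sup>2) \<le> (\<Sum>p\<in>J. c p * (y p)\<^sup>2)"
    and upper: "(\<Sum>p\<in>J. c p * (y p)\<^sup>2) \<le> b * (\<Sum>p\<in>J. (y p)\<^sup>2)" for y
    unfolding sum_distrib_left using c by (auto intro!: sum_mono mult_right_mono)
  have "SS (\<gamma> / a) \<subseteq> S"
    using a by (auto simp: S_def SS_def field_simps intro: less_le_trans[OF _ lower])
  moreover have "S \<subseteq> SS (\<gamma> / b)"
    using b by (auto simp: S_def SS_def field_simps intro: less_le_trans[OF _ upper])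
  moreover have "S \<in> sets (stdN_PiM J)" "SS t \<in> sets (stdN_PiM J)" for t
    unfolding S_def SS_def by measurable
  ultimately show "Qchi2 (card J) (\<gamma> / a) \<le> measure (stdN_PiM J) S" "measure (stdN_PiM J) S \<le> Qchi2 (card J) (\<gamma> / b)"
    unfolding Q[symmetric] by (simp_all add: P.finite_measure_mono)
qed

lemma (in prob_space) distr_std_normal_family:
  assumes ne: "I \<noteq> {}" and indep: "indep_vars (\<lambda>_. borel) G I"
    and std: "\<And>i. i \<in> I \<Longrightarrow> distributed M lborel (G i) std_normal_density"
  shows "distr M (stdN_PiM I) (\<lambda>\<omega>. \<lambda>i\<in>I. G i \<omega>) = stdN_PiM I"
proof -
  have G: "distr M borel (G i) = stdN" "G i \<in> borel_measurable M" if "i \<in> I" for i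
    using std[OF that] by (auto simp: distributed_def stdN_def cong: distr_cong)
  have "distr M (\<Pi>\<^sub>M i\<in>I. borel) (\<lambda>\<omega>. \<lambda>i\<in>I. G i \<omega>) = (\<Pi>\<^sub>M i\<in>I. distr M borel (G i))"
    using indep_vars_iff_distr_eq_PiM'[OF ne G(2)] indep by simp
  also have "\<dots> = stdN_PiM I"
    using G by (intro PiM_cong) auto
  finally show ?thesis
    by (simp cong: distr_cong sets_PiM_cong)
qed

lemma (in prob_space) distr_orthonormal_combination_std_normal:
  fixes e :: "'j \<Rightarrow> 'i \<Rightarrow> real"
  assumes finI: "finite I" and ne: "I \<noteq> {}" and indep: "indep_vars (\<lambda>_. borel) G I"
    and std: "\<And>i. i \<in> I \<Longrightarrow> distributed M lborel (G i) std_normal_density"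
    and finJ: "finite J" and orth: "\<forall>k\<in>J. \<forall>k'\<in>J. (\<Sum>i\<in>I. e k i * e k' i) = (if k = k' then 1 else 0)"
  shows "distr M (stdN_PiM J) (\<lambda>\<omega>. \<lambda>k\<in>J. \<Sum>i\<in>I. e k i * G i \<omega>) = stdN_PiM J"
proof -
  let ?G = "\<lambda>\<omega>. \<lambda>i\<in>I. G i \<omega>" and ?L = "\<lambda>x. \<lambda>k\<in>J. \<Sum>i\<in>I. e k i * x i"
  have law: "distr M (stdN_PiM I) ?G = stdN_PiM I"
    by (rule distr_std_normal_family[OF ne indep std])
  have mG: "?G \<in> measurable M (stdN_PiM I)"
    by (rule measurable_restrict) (use std in \<open>auto simp: distributed_def cong: measurable_cong_sets\<close>)
  have mL: "?L \<in> measurable (stdN_PiM I) (stdN_PiM J)"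
    by (rule measurable_restrict) (use finI in measurable)
  have "(\<lambda>\<omega>. \<lambda>k\<in>J. \<Sum>i\<in>I. e k i * G i \<omega>) = ?L \<circ> ?G"
    by (auto simp: fun_eq_iff)
  then show ?thesis
    using distr_distr[OF mL mG] law distr_stdN_PiM_orthonormal_rows[OF finJ finI orth] by simp
qed

section \<open>The projected detector\<close>

lemma sum_Times_if_fst:
  fixes f :: "'k \<Rightarrow> 'a::semiring_0"
  assumes "finite A" "n \<in> A"
  shows "(\<Sum>(x, k)\<in>A \<times> B. (if x = n then f k else 0) * h x k) = (\<Sum>k\<in>B. f k * h n k)"
proof -
  have "(\<Sum>(x, k)\<in>A \<times> B. (if x = n then f k else 0) * h x k) = (\<Sum>x\<in>A. \<Sum>k\<in>B. (if x = n then f k else 0) * h x k)"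
    by (simp add: sum.cartesian_product)
  also have "\<dots> = (\<Sum>x\<in>A. if x = n then (\<Sum>k\<in>B. f k * h n k) else 0)"
    by (intro sum.cong refl) auto
  finally show ?thesis
    using assms by (simp add: sum.delta')
qed

lemma sum_Times_Times_if_mid:
  fixes f :: "'m \<Rightarrow> 'k \<Rightarrow> 'a::semiring_0"
  assumes "finite A" "n \<in> A"
  shows "(\<Sum>(m, x, k)\<in>C \<times> A \<times> B. (if x = n then f m k else 0) * h m x k) = (\<Sum>m\<in>C. \<Sum>k\<in>B. f m k * h m n k)"
proof -
  have "(\<Sum>(m, x, k)\<in>C \<times> A \<times> B. (if x = n then f m k else 0) * h m x k)
      = (\<Sum>m\<in>C. \<Sum>(x, k)\<in>A \<times> B. (if x = n then f m k else 0) * h m x k)"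
    by (subst sum.cartesian_product[symmetric]) (simp add: case_prod_beta')
  also have "\<dots> = (\<Sum>m\<in>C. \<Sum>k\<in>B. f m k * h m n k)"
    using assms by (intro sum.cong refl sum_Times_if_fst)
  finally show ?thesis .
qed

locale projected_detection =
  fixes N K M1 Nb :: nat
    and H u T :: "nat \<Rightarrow> nat \<Rightarrow> real"
    and rho2 :: "nat \<Rightarrow> real"
    and sx s0 :: real
  assumes u_orthonormal: "\<And>i i'. i < N \<Longrightarrow> i' < N \<Longrightarrow> (\<Sum>j<N. u i j * u i' j) = (if i = i' then 1 else 0)"
    and u_eigen: "\<And>i l. i < N \<Longrightarrow> l < N \<Longrightarrow> (\<Sum>j<N. (\<Sum>k<K. H l k * H j k) * u i j) = rho2 i * u i l"
    and rho_sorted: "\<And>i j. i \<le> j \<Longrightarrow> j < N \<Longrightarrow> rho2 j \<le> rho2 i"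
    and rho_nonneg: "rho2 (N - 1) \<ge> 0"
    and M1_pos: "1 \<le> M1" and M1_le: "M1 \<le> N"
    and T_orth1: "\<And>i i'. i < M1 \<Longrightarrow> i' < M1 \<Longrightarrow> (\<Sum>j<M1. T j i * T j i') = (if i = i' then 1 else 0)"
    and T_orth2: "\<And>i i'. i < M1 \<Longrightarrow> i' < M1 \<Longrightarrow> (\<Sum>j<M1. T i j * T i' j) = (if i = i' then 1 else 0)"
    and Nb_pos: "1 \<le> Nb"
    and s0_pos: "s0 > 0"
begin

definition signal_coef :: "nat \<Rightarrow> nat \<Rightarrow> real" where
  "signal_coef i k = (\<Sum>j<N. u i j * H j k)"

definition noise_coef :: "nat \<Rightarrow> nat \<Rightarrow> nat \<Rightarrow> real" where
  "noise_coef i m j = T m i * (\<Sum>l<M1. T m l * u l j)"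

definition rotated_var :: "nat \<Rightarrow> real" where
  "rotated_var i = s0\<^sup>2 + sx\<^sup>2 * rho2 i"

definition sources :: "((nat \<times> nat) + (nat \<times> nat \<times> nat)) set" where
  "sources = ({..<Nb} \<times> {..<K}) <+> ({..<M1} \<times> {..<Nb} \<times> {..<N})"

text \<open>\<open>whiten (i, n)\<close> lists the coefficients of \<open>\<surd>M\<^sub>1 (T\<^sub>s\<^sup>T z\<^sub>s[n])\<^sub>i / \<surd>rotated_var i\<close> with respect to
  the standard normal sources, \<open>Inl (n, k)\<close> standing for \<open>x[n]\<^sub>k / \<sigma>\<^sub>x\<close> and \<open>Inr (m, n, j)\<close> for
  \<open>w\<^sub>m[n]\<^sub>j / \<sigma>\<^sub>0\<close>.\<close>

definition whiten :: "nat \<times> nat \<Rightarrow> (nat \<times> nat) + (nat \<times> nat \<times> nat) \<Rightarrow> real" where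
  "whiten p a = (case p of (i, n) \<Rightarrow>
     (case a of Inl (n', k) \<Rightarrow> if n' = n then sx * signal_coef i k / sqrt (rotated_var i) else 0
        | Inr (m, n', j) \<Rightarrow> if n' = n then s0 * noise_coef i m j / sqrt (rotated_var i) else 0))"

lemma rho2_nonneg:
  assumes "i < M1"
  shows "rho2 i \<ge> 0"
proof -
  have "rho2 (N - 1) \<le> rho2 i"
    using assms M1_le by (intro rho_sorted) auto
  then show ?thesis
    using rho_nonneg by simp
qed

lemma rotated_var_pos: "i < M1 \<Longrightarrow> rotated_var i > 0"
  using s0_pos rho2_nonneg by (simp add: rotated_var_def add_pos_nonneg)

lemma finite_sources [simp]: "finite sources"
  by (simp add: sources_def)

lemma signal_coef_orth:
  assumes "i < N" "i' < N"
  shows "(\<Sum>k<K. signal_coef i k * signal_coef i' k) = (if i = i' then rho2 i else 0)"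
proof -
  have "(\<Sum>k<K. signal_coef i k * signal_coef i' k) = (\<Sum>k<K. \<Sum>j<N. \<Sum>j'<N. u i j * u i' j' * (H j k * H j' k))"
    unfolding signal_coef_def sum_product by (intro sum.cong refl) (simp add: algebra_simps)
  also have "\<dots> = (\<Sum>j<N. \<Sum>j'<N. \<Sum>k<K. u i j * u i' j' * (H j k * H j' k))"
    by (subst sum.swap) (simp add: sum.swap[of _ "{..<K}"])
  also have "\<dots> = (\<Sum>j<N. u i j * (\<Sum>j'<N. (\<Sum>k<K. H j k * H j' k) * u i' j'))"
    by (intro sum.cong refl) (simp add: sum_distrib_left sum_distrib_right algebra_simps)
  also have "\<dots> = rho2 i' * (\<Sum>j<N. u i j * u i' j)"
    using u_eigen assms by (simp add: sum_distrib_left algebra_simps)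
  also have "\<dots> = (if i = i' then rho2 i else 0)"
    using u_orthonormal[OF assms] by simp
  finally show ?thesis .
qed

lemma noise_coef_orth:
  assumes "i < M1" "i' < M1"
  shows "(\<Sum>m<M1. \<Sum>j<N. noise_coef i m j * noise_coef i' m j) = (if i = i' then 1 else 0)"
proof -
  have row: "(\<Sum>j<N. (\<Sum>l<M1. u l j * T m l) * (\<Sum>l<M1. u l j * T m l)) = 1" if "m < M1" for m
  proof -
    have "(\<Sum>j<N. (\<Sum>l<M1. u l j * T m l) * (\<Sum>l<M1. u l j * T m l)) = (\<Sum>l<M1. T m l * T m l)"
      by (rule sum_orthonormal_cols_inner) (use u_orthonormal M1_le in auto)
    then show ?thesis
      using T_orth2[OF that that] by simp
  qed
  have "(\<Sum>m<M1. \<Sum>j<N. noise_coef i m j * noise_coef i' m j)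
      = (\<Sum>m<M1. T m i * T m i' * (\<Sum>j<N. (\<Sum>l<M1. u l j * T m l) * (\<Sum>l<M1. u l j * T m l)))"
    unfolding noise_coef_def by (intro sum.cong refl) (simp add: sum_distrib_left algebra_simps)
  also have "\<dots> = (\<Sum>m<M1. T m i * T m i')"
    using row by simp
  finally show ?thesis
    using T_orth1[OF assms] by simp
qed

abbreviation signal_part :: "(nat \<Rightarrow> nat \<Rightarrow> real) \<Rightarrow> nat \<Rightarrow> nat \<Rightarrow> real" where
  "signal_part x i n \<equiv> \<Sum>k<K. signal_coef i k * x n k"

abbreviation noise_part :: "(nat \<Rightarrow> nat \<Rightarrow> nat \<Rightarrow> real) \<Rightarrow> nat \<Rightarrow> nat \<Rightarrow> real" where
  "noise_part w i n \<equiv> \<Sum>m<M1. \<Sum>j<N. noise_coef i m j * w m n j"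

lemma rotated_output:
  assumes i: "i < M1"
  shows "(\<Sum>m<M1. T m i * z_out True N K (Phi_s M1 T u) H sx s0 X W m n \<omega>)
    = (sx * signal_part (\<lambda>n k. X n k \<omega>) i n + s0 * noise_part (\<lambda>m n j. W m n j \<omega>) i n) / sqrt M1"
proof -
  define x where "x j = (\<Sum>k<K. H j k * (sx * X n k \<omega>))" for j
  have "(\<Sum>m<M1. T m i * (\<Sum>j<N. Phi_s M1 T u m j * x j))
      = (\<Sum>m<M1. T m i * (\<Sum>l<M1. T m l * (\<Sum>j<N. u l j * x j))) / sqrt M1"
    by (simp add: Phi_s_def sum_distrib_left sum_divide_distrib sum.swap[of _ "{..<N}"] algebra_simps)
  also have "(\<Sum>m<M1. T m i * (\<Sum>l<M1. T m l * (\<Sum>j<N. u l j * x j))) = (\<Sum>j<N. u i j * x j)"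
    by (rule sum_orthonormal_cols_transpose[where q = T]) (use T_orth1 i in auto)
  also have "(\<Sum>j<N. u i j * x j) = sx * signal_part (\<lambda>n k. X n k \<omega>) i n"
    by (simp add: x_def signal_coef_def sum_distrib_left sum_distrib_right sum.swap[of _ "{..<N}"] algebra_simps)
  finally have "(\<Sum>m<M1. T m i * (\<Sum>j<N. Phi_s M1 T u m j * x j)) = sx * signal_part (\<lambda>n k. X n k \<omega>) i n / sqrt M1" .
  moreover have "(\<Sum>m<M1. T m i * (\<Sum>j<N. Phi_s M1 T u m j * (s0 * W m n j \<omega>))) = s0 * noise_part (\<lambda>m n j. W m n j \<omega>) i n / sqrt M1"
    by (simp add: noise_coef_def Phi_s_def sum_distrib_left sum_distrib_right algebra_simps sum_divide_distrib)
  ultimately show ?thesis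
    by (simp add: z_out_def x_def distrib_left sum.distrib add_divide_distrib)
qed

lemma sum_sq_z_out:
  "(\<Sum>m<M1. (z_out True N K (Phi_s M1 T u) H sx s0 X W m n \<omega>)\<^sup>2)
    = (\<Sum>i<M1. (sx * signal_part (\<lambda>n k. X n k \<omega>) i n + s0 * noise_part (\<lambda>m n j. W m n j \<omega>) i n)\<^sup>2) / M1"
proof -
  let ?z = "\<lambda>m. z_out True N K (Phi_s M1 T u) H sx s0 X W m n \<omega>"
  have "(\<Sum>m<M1. (?z m)\<^sup>2) = (\<Sum>i<M1. (\<Sum>m<M1. T m i * ?z m)\<^sup>2)"
    using sum_orthonormal_cols_inner[where q = "\<lambda>i m. T m i" and A = "{..<M1}" and B = "{..<M1}" and a = ?z and b = ?z]
      T_orth2 by (simp add: power2_eq_square)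
  also have "\<dots> = (\<Sum>i<M1. (sx * signal_part (\<lambda>n k. X n k \<omega>) i n + s0 * noise_part (\<lambda>m n j. W m n j \<omega>) i n)\<^sup>2 / M1)"
    using M1_pos by (intro sum.cong refl) (simp add: rotated_output power_divide)
  finally show ?thesis
    by (simp add: sum_divide_distrib)
qed

lemma sum_sources:
  "(\<Sum>a\<in>sources. f a) = (\<Sum>a\<in>{..<Nb} \<times> {..<K}. f (Inl a)) + (\<Sum>a\<in>{..<M1} \<times> {..<Nb} \<times> {..<N}. f (Inr a))"
  unfolding sources_def by (subst sum.Plus) (auto simp: comp_def)

lemma sum_whiten:
  assumes n: "n < Nb"
  shows "(\<Sum>a\<in>sources. whiten (i, n) a * g a)
    = (sx * signal_part (\<lambda>n k. g (Inl (n, k))) i n + s0 * noise_part (\<lambda>m n j. g (Inr (m, n, j))) i n)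
      / sqrt (rotated_var i)"
proof -
  have "(\<Sum>a\<in>{..<Nb} \<times> {..<K}. whiten (i, n) (Inl a) * g (Inl a))
      = (\<Sum>(n', k)\<in>{..<Nb} \<times> {..<K}. (if n' = n then sx * signal_coef i k / sqrt (rotated_var i) else 0) * g (Inl (n', k)))"
    by (intro sum.cong refl) (auto simp: whiten_def)
  also have "\<dots> = (\<Sum>k<K. sx * signal_coef i k / sqrt (rotated_var i) * g (Inl (n, k)))"
    using n by (intro sum_Times_if_fst) auto
  finally have signal: "(\<Sum>a\<in>{..<Nb} \<times> {..<K}. whiten (i, n) (Inl a) * g (Inl a))
      = (\<Sum>k<K. sx * signal_coef i k / sqrt (rotated_var i) * g (Inl (n, k)))" .
  have "(\<Sum>a\<in>{..<M1} \<times> {..<Nb} \<times> {..<N}. whiten (i, n) (Inr a) * g (Inr a))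
      = (\<Sum>(m, n', j)\<in>{..<M1} \<times> {..<Nb} \<times> {..<N}. (if n' = n then s0 * noise_coef i m j / sqrt (rotated_var i) else 0) * g (Inr (m, n', j)))"
    by (intro sum.cong refl) (auto simp: whiten_def)
  also have "\<dots> = (\<Sum>m<M1. \<Sum>j<N. s0 * noise_coef i m j / sqrt (rotated_var i) * g (Inr (m, n, j)))"
    using n by (intro sum_Times_Times_if_mid) auto
  finally show ?thesis
    using signal
    by (simp add: sum_sources add_divide_distrib sum_distrib_left sum_divide_distrib algebra_simps)
qed

lemma whiten_orthonormal:
  assumes p: "p \<in> {..<M1} \<times> {..<Nb}" and p': "p' \<in> {..<M1} \<times> {..<Nb}"
  shows "(\<Sum>a\<in>sources. whiten p a * whiten p' a) = (if p = p' then 1 else 0)"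
proof -
  obtain i n i' n' where pp: "p = (i, n)" "p' = (i', n')" and i: "i < M1" "i' < M1" and n: "n < Nb" "n' < Nb"
    using p p' by auto
  have "(\<Sum>a\<in>sources. whiten p a * whiten p' a)
      = (if n' = n then (sx\<^sup>2 * (\<Sum>k<K. signal_coef i k * signal_coef i' k)
          + s0\<^sup>2 * (\<Sum>m<M1. \<Sum>j<N. noise_coef i m j * noise_coef i' m j)) / (sqrt (rotated_var i) * sqrt (rotated_var i'))
         else 0)"
    unfolding pp sum_whiten[OF n(1)]
    by (simp add: whiten_def sum_distrib_left sum_divide_distrib power2_eq_square algebra_simps add_divide_distrib)
  also have "\<dots> = (if p = p' then 1 else 0)"
    using i M1_le rotated_var_pos[OF i(1)] signal_coef_orth noise_coef_orth[OF i]
    by (auto simp: pp rotated_var_def)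
  finally show ?thesis .
qed

lemma test_stat_whitened:
  "test_stat True N K M1 Nb (Phi_s M1 T u) H sx s0 (\<lambda>n k. G (Inl (n, k))) (\<lambda>m n j. G (Inr (m, n, j))) \<omega>
    = (\<Sum>p\<in>{..<M1} \<times> {..<Nb}. rotated_var (fst p) / s0\<^sup>2 * (\<Sum>a\<in>sources. whiten p a * G a \<omega>)\<^sup>2)"
proof -
  have "(sx * signal_part (\<lambda>n k. G (Inl (n, k)) \<omega>) i n + s0 * noise_part (\<lambda>m n j. G (Inr (m, n, j)) \<omega>) i n)\<^sup>2
      = rotated_var i * (\<Sum>a\<in>sources. whiten (i, n) a * G a \<omega>)\<^sup>2" if "i < M1" "n < Nb" for i n
    using rotated_var_pos[OF that(1)] by (simp add: sum_whiten[OF that(2)] power_divide)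
  then have "test_stat True N K M1 Nb (Phi_s M1 T u) H sx s0 (\<lambda>n k. G (Inl (n, k))) (\<lambda>m n j. G (Inr (m, n, j))) \<omega>
      = (\<Sum>n<Nb. (\<Sum>i<M1. rotated_var i * (\<Sum>a\<in>sources. whiten (i, n) a * G a \<omega>)\<^sup>2) / M1) / (s0\<^sup>2 / M1)"
    unfolding test_stat_def sum_sq_z_out by (intro arg_cong2[where f = "(/)"] sum.cong) auto
  also have "\<dots> = (\<Sum>n<Nb. \<Sum>i<M1. rotated_var i * (\<Sum>a\<in>sources. whiten (i, n) a * G a \<omega>)\<^sup>2) / s0\<^sup>2"
    using M1_pos by (simp add: sum_divide_distrib[symmetric])
  also have "\<dots> = (\<Sum>p\<in>{..<M1} \<times> {..<Nb}. rotated_var (fst p) / s0\<^sup>2 * (\<Sum>a\<in>sources. whiten p a * G a \<omega>)\<^sup>2)"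
    by (subst sum.swap) (simp add: sum.cartesian_product case_prod_beta' sum_divide_distrib)
  finally show ?thesis .
qed

theorem detection_probability_bounds:
  fixes M :: "'a measure" and \<gamma> :: real
  assumes "prob_space M"
    and indep: "prob_space.indep_vars M (\<lambda>_. borel) G sources"
    and std: "\<And>a. a \<in> sources \<Longrightarrow> distributed M lborel (G a) std_normal_density"
  defines "P \<equiv> prob_space.prob M {\<omega> \<in> space M.
      \<gamma> < test_stat True N K M1 Nb (Phi_s M1 T u) H sx s0 (\<lambda>n k. G (Inl (n, k))) (\<lambda>m n j. G (Inr (m, n, j))) \<omega>}"
  shows "Qchi2 (M1 * Nb) (s0\<^sup>2 / rotated_var (M1 - 1) * \<gamma>) \<le> P" and "P \<le> Qchi2 (M1 * Nb) (s0\<^sup>2 / rotated_var 0 * \<gamma>)"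
proof -
  interpret prob_space M by fact
  define J where "J = {..<M1} \<times> {..<Nb}"
  define c where "c p = rotated_var (fst p) / s0\<^sup>2" for p :: "nat \<times> nat"
  define L where "L \<omega> = (\<lambda>p\<in>J. \<Sum>a\<in>sources. whiten p a * G a \<omega>)" for \<omega>
  define S where "S = {y \<in> space (stdN_PiM J). \<gamma> < (\<Sum>p\<in>J. c p * (y p)\<^sup>2)}"
  have J: "finite J" "J \<noteq> {}" "card J = M1 * Nb"
    using M1_pos Nb_pos by (auto simp: J_def card_cartesian_product lessThan_empty_iff)
  have "Inr (0, 0, 0) \<in> sources"
    using M1_pos Nb_pos M1_le by (auto simp: sources_def)
  then have law: "distr M (stdN_PiM J) L = stdN_PiM J"
    unfolding L_def using whiten_orthonormal
    by (intro distr_orthonormal_combination_std_normal[OF finite_sources _ indep std]) (auto simp: J_def)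
  have "(\<lambda>\<omega>. \<Sum>a\<in>sources. whiten p a * G a \<omega>) \<in> borel_measurable M" for p
    using std by (intro borel_measurable_sum borel_measurable_times) (auto simp: distributed_def)
  moreover have "measurable M stdN = borel_measurable M"
    by (rule measurable_cong_sets) auto
  ultimately have mL: "L \<in> measurable M (stdN_PiM J)"
    unfolding L_def by (intro measurable_restrict) auto
  have "{\<omega> \<in> space M. \<gamma> < test_stat True N K M1 Nb (Phi_s M1 T u) H sx s0 (\<lambda>n k. G (Inl (n, k))) (\<lambda>m n j. G (Inr (m, n, j))) \<omega>}
      = L -` S \<inter> space M"
    using measurable_space[OF mL] by (auto simp: test_stat_whitened S_def L_def J_def c_def)
  moreover have "S \<in> sets (stdN_PiM J)"
    unfolding S_def by measurable
  ultimately have P: "P = measure (stdN_PiM J) S"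
    unfolding P_def using measure_distr[OF mL] law by simp
  have c: "rotated_var (M1 - 1) / s0\<^sup>2 \<le> c p \<and> c p \<le> rotated_var 0 / s0\<^sup>2" if "p \<in> J" for p
    using that M1_le rho_sorted[of "fst p" "M1 - 1"] rho_sorted[of 0 "fst p"]
    by (auto simp: c_def J_def rotated_var_def intro!: divide_right_mono mult_left_mono)
  have "0 < rotated_var (M1 - 1) / s0\<^sup>2"
    using rotated_var_pos[of "M1 - 1"] M1_pos s0_pos by simp
  from measure_stdN_PiM_weighted_sum_squares_bounds[OF J(1,2) this c]
  show "Qchi2 (M1 * Nb) (s0\<^sup>2 / rotated_var (M1 - 1) * \<gamma>) \<le> P" and "P \<le> Qchi2 (M1 * Nb) (s0\<^sup>2 / rotated_var 0 * \<gamma>)"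
    unfolding P S_def J(3) by (simp_all add: field_simps)
qed

end

theorem proposition1:
  fixes M :: "'a measure"
    and N K M1 Nb :: nat
    and H :: "nat \<Rightarrow> nat \<Rightarrow> real"
    and u :: "nat \<Rightarrow> nat \<Rightarrow> real"
    and rho2 :: "nat \<Rightarrow> real"
    and T :: "nat \<Rightarrow> nat \<Rightarrow> real"
    and sx s0 \<gamma> :: real
    and X :: "nat \<Rightarrow> nat \<Rightarrow> 'a \<Rightarrow> real"
    and W :: "nat \<Rightarrow> nat \<Rightarrow> nat \<Rightarrow> 'a \<Rightarrow> real"
  assumes "1 \<le> K" and "K \<le> N"
    and full_rank: "\<And>c. (\<forall>i<N. (\<Sum>k<K. H i k * c k) = 0) \<Longrightarrow> (\<forall>k<K. c k = 0)"
    and u_orthonormal: "\<And>i i'. i < N \<Longrightarrow> i' < N \<Longrightarrow> (\<Sum>j<N. u i j * u i' j) = (if i = i' then 1 else 0)"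
    and u_eigen: "\<And>i l. i < N \<Longrightarrow> l < N \<Longrightarrow>
                    (\<Sum>j<N. (\<Sum>k<K. H l k * H j k) * u i j) = rho2 i * u i l"
    and rho_sorted: "\<And>i j. i \<le> j \<Longrightarrow> j < N \<Longrightarrow> rho2 j \<le> rho2 i"
    and rho_nonneg: "rho2 (N - 1) \<ge> 0"
    and rho_distinct: "rho2 0 > rho2 (N - 1)"
    and "1 \<le> M1" and "M1 \<le> N"
    and T_orth1: "\<And>i i'. i < M1 \<Longrightarrow> i' < M1 \<Longrightarrow> (\<Sum>j<M1. T j i * T j i') = (if i = i' then 1 else 0)"
    and T_orth2: "\<And>i i'. i < M1 \<Longrightarrow> i' < M1 \<Longrightarrow> (\<Sum>j<M1. T i j * T i' j) = (if i = i' then 1 else 0)"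
    and "1 \<le> Nb"
    and "sx \<ge> 0" and "s0 > 0" and "\<gamma> > 0"
    and "prob_space M"
    and indep: "prob_space.indep_vars M (\<lambda>_. borel)
                 (\<lambda>i. case i of Inl (n, k) \<Rightarrow> X n k | Inr (m, n, j) \<Rightarrow> W m n j)
                 (({..<Nb} \<times> {..<K}) <+> ({..<M1} \<times> {..<Nb} \<times> {..<N}))"
    and X_std: "\<And>n k. n < Nb \<Longrightarrow> k < K \<Longrightarrow> distributed M lborel (X n k) std_normal_density"
    and W_std: "\<And>m n j. m < M1 \<Longrightarrow> n < Nb \<Longrightarrow> j < N \<Longrightarrow> distributed M lborel (W m n j) std_normal_density"
  shows "prob_space.prob M {\<omega> \<in> space M. test_stat False N K M1 Nb (Phi_s M1 T u) H sx s0 X W \<omega> > \<gamma>}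
           = Qchi2 (M1 * Nb) \<gamma>
       \<and> Qchi2 (M1 * Nb) ((s0\<^sup>2 / (s0\<^sup>2 + sx\<^sup>2 * rho2 (M1 - 1))) * \<gamma>)
           \<le> prob_space.prob M {\<omega> \<in> space M. test_stat True N K M1 Nb (Phi_s M1 T u) H sx s0 X W \<omega> > \<gamma>}
       \<and> prob_space.prob M {\<omega> \<in> space M. test_stat True N K M1 Nb (Phi_s M1 T u) H sx s0 X W \<omega> > \<gamma>}
           \<le> Qchi2 (M1 * Nb) ((s0\<^sup>2 / (s0\<^sup>2 + sx\<^sup>2 * rho2 0)) * \<gamma>)"
proof -
  let ?G = "\<lambda>i. case i of Inl (n, k) \<Rightarrow> X n k | Inr (m, n, j) \<Rightarrow> W m n j"
  let ?P = "\<lambda>hyp. prob_space.prob M {\<omega> \<in> space M. test_stat hyp N K M1 Nb (Phi_s M1 T u) H sx s0 X W \<omega> > \<gamma>}"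
  interpret H1: projected_detection N K M1 Nb H u T rho2 sx s0
    by unfold_locales (use assms in auto)
  interpret H0: projected_detection N K M1 Nb H u T rho2 0 s0
    by unfold_locales (use assms in auto)
  have sources: "H1.sources = ({..<Nb} \<times> {..<K}) <+> ({..<M1} \<times> {..<Nb} \<times> {..<N})"
    by (simp add: H1.sources_def)
  have std: "\<And>a. a \<in> H1.sources \<Longrightarrow> distributed M lborel (?G a) std_normal_density"
    using X_std W_std by (auto simp: sources)
  have XW: "(\<lambda>n k. ?G (Inl (n, k))) = X" "(\<lambda>m n j. ?G (Inr (m, n, j))) = W"
    by auto
  have "test_stat False N K M1 Nb (Phi_s M1 T u) H sx s0 X W = test_stat True N K M1 Nb (Phi_s M1 T u) H 0 s0 X W"
    by (simp add: fun_eq_iff test_stat_def z_out_def)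
  then have "?P False = Qchi2 (M1 * Nb) \<gamma>"
    using H0.detection_probability_bounds[OF \<open>prob_space M\<close> indep[folded sources] std, of \<gamma>] \<open>s0 > 0\<close>
    by (simp add: XW H0.rotated_var_def)
  moreover note H1.detection_probability_bounds[OF \<open>prob_space M\<close> indep[folded sources] std, of \<gamma>]
  ultimately show ?thesis
    by (simp add: XW H1.rotated_var_def)
qed

end
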